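(* Let $\mathcal G$ be a tree on $n\ge2$ nodes, with oriented incidence matrix $D_\tau\in\mathbb R^{n\times(n-1)}$, edge-weight matrix $W=\rho I$ for some $\rho>0$, and time-scale matrix $E=\mathrm{diag}(\epsilon_1,\dots,\epsilon_n)$, $\epsilon_i>0$; let $L_{e,s}^\tau=D_\tau^TE^{-1}D_\tau$ and $\sigma_w,\sigma_v$ real scalars. Consider $$\tilde\Sigma_\tau(s)=\big(sI+L_{e,s}^\tau W\big)^{-1}\begin{bmatrix}\sigma_wD_\tau^TE^{-1/2} & -\sigma_vL_{e,s}^\tau W^{1/2}\end{bmatrix},\qquad\Pi_\tau(s)=W^{1/2}\tilde\Sigma_\tau(s).$$ Then $$\|\tilde\Sigma_\tau\|_\infty^2=\frac1\rho\|\Pi_\tau\|_\infty^2=\frac{1}{\rho^2}\sigma_w^2\,\bar\sigma\big((L_{e,s}^\tau)^{-1}\big)+\frac1\rho\sigma_v^2=L=U,$$ where $L=\max\{L_1,L_2\}$ with $L_1=\dfrac{\sigma_w^2+\sigma_v^2\lambda_{\min}(L_{e,s}^\tau)\lambda_{\max}(W^{1/2})^2}{\lambda_{\min}(L_{e,s}^\tau)\lambda_{\max}(W^{1/2})^4}$, $L_2=\dfrac{\sigma_w^2+\sigma_v^2\lambda_{\max}(L_{e,s}^\tau)\lambda_{\max}(W^{1/2})\lambda_{\min}(W^{1/2})}{\lambda_{\max}(L_{e,s}^\tau)\lambda_{\max}(W^{1/2})^3\lambda_{\min}(W^{1/2})}$, and $U=\dfrac{\sigma_w^2+\sigma_v^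2\lambda_{\min}(L_{e,s}^\tau)\lambda_{\min}(W^{1/2})^2}{\lambda_{\min}(L_{e,s}^\tau)\lambda_{\min}(W^{1/2})^4}$.
   Context: The incidence matrix of a graph with an arbitrary orientation of each edge has entry $1$ in row $i$, column $l$ if node $i$ is the initial node of edge $l$, $-1$ if it is the terminal node, and $0$ otherwise. Powers of positive diagonal matrices are taken entrywise. $\lambda_{\max},\lambda_{\min}$ denote the largest and smallest eigenvalues of a symmetric matrix. For a stable transfer matrix $\Phi(s)$, $\|\Phi\|_\infty=\sup_{\omega\in\mathbb R}\bar\sigma(\Phi(j\omega))$ where $\bar\sigma$ is the largest singular value. *)

theory Defs
  imports Complex_Main "Jordan_Normal_Form.Jordan_Normal_Form"
begin

(* Graphs on the vertex set {0..<n}; edges are given as a list of ordered pairs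
   (initial node, terminal node), i.e. an arbitrary orientation of each edge. *)

definition ug_adj :: "(nat \<times> nat) list \<Rightarrow> (nat \<times> nat) set" where
  "ug_adj es = {(u,v). \<exists>l<length es. es ! l = (u,v) \<or> es ! l = (v,u)}"

definition ug_connected :: "nat \<Rightarrow> (nat \<times> nat) list \<Rightarrow> bool" where
  "ug_connected n es = (\<forall>u<n. \<forall>v<n. (u,v) \<in> (ug_adj es)\<^sup>*)"

(* A tree: a connected loop-free graph in which every edge is a bridge
   (minimally connected graph). *)
definition is_tree :: "nat \<Rightarrow> (nat \<times> nat) list \<Rightarrow> bool" where
  "is_tree n es =
     ((\<forall>l<length es. fst (es ! l) < n \<and> snd (es ! l) < n \<and> fst (es ! l) \<noteq> snd (es ! l))
      \<and> ug_connected n es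
      \<and> (\<forall>l<length es. (fst (es ! l), snd (es ! l)) \<notin> (ug_adj (take l es @ drop (Suc l) es))\<^sup>*))"

definition incidence :: "nat \<Rightarrow> (nat \<times> nat) list \<Rightarrow> real mat" where
  "incidence n es = mat n (length es)
     (\<lambda>(i,l). if i = fst (es ! l) then 1 else if i = snd (es ! l) then -1 else 0)"

definition diag_of :: "nat \<Rightarrow> (nat \<Rightarrow> real) \<Rightarrow> real mat" where
  "diag_of n d = mat n n (\<lambda>(i,j). if i = j then d i else 0)"

definition diag_pow :: "real mat \<Rightarrow> real \<Rightarrow> real mat" where
  "diag_pow A p = mat (dim_row A) (dim_col A) (\<lambda>(i,j). if i = j then (A $$ (i,i)) powr p else 0)"

definition minv :: "'a::field mat \<Rightarrow> 'a mat" where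
  "minv A = (THE B. B \<in> carrier_mat (dim_row A) (dim_row A)
                  \<and> A * B = 1\<^sub>m (dim_row A) \<and> B * A = 1\<^sub>m (dim_row A))"

definition hcat :: "'a::zero mat \<Rightarrow> 'a mat \<Rightarrow> 'a mat" where
  "hcat A B = mat (dim_row A) (dim_col A + dim_col B)
     (\<lambda>(i,j). if j < dim_col A then A $$ (i,j) else B $$ (i, j - dim_col A))"

definition lam_max :: "real mat \<Rightarrow> real" where
  "lam_max A = Max {k. eigenvalue A k}"

definition lam_min :: "real mat \<Rightarrow> real" where
  "lam_min A = Min {k. eigenvalue A k}"

definition cmat :: "real mat \<Rightarrow> complex mat" where
  "cmat A = map_mat complex_of_real A"

definition conj_transpose :: "complex mat \<Rightarrow> complex mat" where
  "conj_transpose A = map_mat cnj (transpose_mat A)"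

definition sigma_max :: "complex mat \<Rightarrow> real" where
  "sigma_max A = sqrt (Max (Re ` {k. eigenvalue (conj_transpose A * A) k}))"

definition hinf_norm :: "(complex \<Rightarrow> complex mat) \<Rightarrow> real" where
  "hinf_norm Phi = (SUP \<omega>::real. sigma_max (Phi (\<i> * complex_of_real \<omega>)))"

end

theory Submission
  imports Defs "HOL-Computational_Algebra.Fundamental_Theorem_Algebra"
begin

text \<open>With \<open>W = \<rho> I\<close> everything is a function of the Laplacian \<open>L = D\<^sup>T E\<^sup>-\<^sup>1 D\<close>, which is
  positive definite because the incidence matrix of a tree has trivial kernel; let \<open>\<mu>\<close> be its least
  eigenvalue. Along an eigenvalue \<open>\<lambda>\<close> of \<open>L\<close> the gain of \<open>\<Sigma>(i\<omega>) \<Sigma>(i\<omega>)\<^sup>H\<close> is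
  \<open>(\<sigma>w\<^sup>2 \<lambda> + \<sigma>v\<^sup>2 \<rho> \<lambda>\<^sup>2) / (\<omega>\<^sup>2 + \<rho>\<^sup>2 \<lambda>\<^sup>2)\<close>, largest at \<open>\<omega> = 0\<close> and \<open>\<lambda> = \<mu>\<close>, so the squared
  \<open>H\<^sub>\<infinity>\<close> norm of \<open>\<Sigma>\<close> is \<open>\<sigma>w\<^sup>2 / (\<rho>\<^sup>2 \<mu>) + \<sigma>v\<^sup>2 / \<rho>\<close>. Instead of diagonalising \<open>L\<close>, the upper
  bound follows from the Rayleigh inequality \<open>\<mu> <y, L y> \<le> |L y|\<^sup>2\<close>, and it is attained at \<open>s = 0\<close>
  on an eigenvector of \<open>\<mu>\<close>. The other expressions are the same number: the largest singular value
  of \<open>L\<^sup>-\<^sup>1\<close> is \<open>1 / \<mu>\<close>, \<open>L1 = U\<close> because \<open>W\<^sup>1\<^sup>/\<^sup>2 = \<surd>\<rho> I\<close>, and \<open>L2 \<le> L1\<close> because the largest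
  eigenvalue of \<open>L\<close> is at least \<open>\<mu>\<close>.\<close>

section \<open>Hermitian forms on complex vectors\<close>

text \<open>Unlike the library's \<open>\<bullet>c\<close>, \<open>cinner\<close> is conjugate-linear in its first argument.\<close>

definition cinner :: "complex vec \<Rightarrow> complex vec \<Rightarrow> complex" where
  "cinner u v = (\<Sum>i<dim_vec u. cnj (u$i) * v$i)"

definition cnorm2 :: "complex vec \<Rightarrow> real" where
  "cnorm2 v = (\<Sum>i<dim_vec v. (cmod (v$i))\<^sup>2)"

lemma cnorm2_nonneg: "0 \<le> cnorm2 v"
  unfolding cnorm2_def by (simp add: sum_nonneg)

lemma cinner_self: "cinner v v = complex_of_real (cnorm2 v)"
  unfolding cinner_def cnorm2_def of_real_sum
  by (rule sum.cong) (simp_all add: complex_norm_square mult.commute flip: of_real_power)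

lemma cnorm2_eq_0_iff: "v \<in> carrier_vec n \<Longrightarrow> cnorm2 v = 0 \<longleftrightarrow> v = 0\<^sub>v n"
  unfolding cnorm2_def by (subst sum_nonneg_eq_0_iff) auto

lemma cnorm2_pos: "v \<in> carrier_vec n \<Longrightarrow> v \<noteq> 0\<^sub>v n \<Longrightarrow> 0 < cnorm2 v"
  using cnorm2_eq_0_iff cnorm2_nonneg by (metis order_less_le)

lemma cnorm2_smult: "cnorm2 (c \<cdot>\<^sub>v v) = (cmod c)\<^sup>2 * cnorm2 v"
  unfolding cnorm2_def by (simp add: sum_distrib_left norm_mult power_mult_distrib)

lemma cnorm2_unit_vec: "i < n \<Longrightarrow> cnorm2 (unit_vec n i) = 1"
  unfolding cnorm2_def by (simp add: unit_vec_def if_distrib[of "\<lambda>x. (cmod x)\<^sup>2"] sum.If_cases)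

lemma cinner_commute: "u \<in> carrier_vec n \<Longrightarrow> v \<in> carrier_vec n \<Longrightarrow> cinner u v = cnj (cinner v u)"
  unfolding cinner_def by (simp add: mult.commute)

lemma cinner_add_left:
  "u \<in> carrier_vec n \<Longrightarrow> w \<in> carrier_vec n \<Longrightarrow> v \<in> carrier_vec n \<Longrightarrow> cinner (u + w) v = cinner u v + cinner w v"
  unfolding cinner_def by (simp add: distrib_right sum.distrib)

lemma cinner_add_right:
  "u \<in> carrier_vec n \<Longrightarrow> w \<in> carrier_vec n \<Longrightarrow> v \<in> carrier_vec n \<Longrightarrow> cinner v (u + w) = cinner v u + cinner v w"
  unfolding cinner_def by (simp add: distrib_left sum.distrib)

lemma cinner_diff_right:
  "u \<in> carrier_vec n \<Longrightarrow> w \<in> carrier_vec n \<Longrightarrow> v \<in> carrier_vec n \<Longrightarrow> cinner v (u - w) = cinner v u - cinner v w"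
  unfolding cinner_def by (simp add: right_diff_distrib sum_subtractf)

lemma cinner_smult_left: "cinner (c \<cdot>\<^sub>v u) v = cnj c * cinner u v"
  unfolding cinner_def by (simp add: sum_distrib_left mult.assoc)

lemma cinner_smult_right: "u \<in> carrier_vec n \<Longrightarrow> v \<in> carrier_vec n \<Longrightarrow> cinner u (c \<cdot>\<^sub>v v) = c * cinner u v"
  unfolding cinner_def by (simp add: sum_distrib_left mult_ac)

lemma cinner_zero_right: "cinner u (0\<^sub>v (dim_vec u)) = 0"
  unfolding cinner_def by simp

lemma cnorm2_add:
  assumes "u \<in> carrier_vec n" "v \<in> carrier_vec n"
  shows "cnorm2 (u + v) = cnorm2 u + cnorm2 v + 2 * Re (cinner u v)"
proof -
  have "complex_of_real (cnorm2 (u + v)) = cinner u u + cinner v v + (cinner u v + cinner v u)"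
    using assms by (simp add: cinner_self[symmetric] cinner_add_left cinner_add_right)
  also have "cinner u v + cinner v u = complex_of_real (2 * Re (cinner u v))"
    using cinner_commute[OF assms(2,1)] by (simp add: complex_add_cnj)
  finally have "complex_of_real (cnorm2 (u + v)) = complex_of_real (cnorm2 u + cnorm2 v + 2 * Re (cinner u v))"
    by (simp add: cinner_self)
  then show ?thesis
    using of_real_eq_iff by blast
qed

lemma conj_transpose_carrier [simp]: "A \<in> carrier_mat n m \<Longrightarrow> conj_transpose A \<in> carrier_mat m n"
  unfolding conj_transpose_def by auto

lemma conj_transpose_dim [simp]:
  "dim_row (conj_transpose A) = dim_col A" "dim_col (conj_transpose A) = dim_row A"
  unfolding conj_transpose_def by auto

lemma conj_transpose_index [simp]:
  "i < dim_col A \<Longrightarrow> j < dim_row A \<Longrightarrow> conj_transpose A $$ (i,j) = cnj (A $$ (j,i))"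
  unfolding conj_transpose_def by auto

lemma conj_transpose_conj_transpose [simp]: "conj_transpose (conj_transpose A) = A"
  unfolding conj_transpose_def by (rule eq_matI) auto

lemma conj_transpose_one [simp]: "conj_transpose (1\<^sub>m n) = 1\<^sub>m n"
  unfolding conj_transpose_def by (rule eq_matI) auto

lemma conj_transpose_smult: "conj_transpose (c \<cdot>\<^sub>m A) = cnj c \<cdot>\<^sub>m conj_transpose A"
  unfolding conj_transpose_def by (rule eq_matI) auto

lemma conj_transpose_add:
  "A \<in> carrier_mat n m \<Longrightarrow> B \<in> carrier_mat n m \<Longrightarrow> conj_transpose (A + B) = conj_transpose A + conj_transpose B"
  unfolding conj_transpose_def by (rule eq_matI) auto

lemma conj_transpose_minus:
  "A \<in> carrier_mat n m \<Longrightarrow> B \<in> carrier_mat n m \<Longrightarrow> conj_transpose (A - B) = conj_transpose A - conj_transpose B"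
  unfolding conj_transpose_def by (rule eq_matI) auto

lemma conj_transpose_mult:
  assumes "A \<in> carrier_mat n k" "B \<in> carrier_mat k m"
  shows "conj_transpose (A * B) = conj_transpose B * conj_transpose A"
  using assms by (intro eq_matI) (auto simp: scalar_prod_def mult.commute intro!: sum.cong)

lemma mult_mat_vec_index:
  "A \<in> carrier_mat n m \<Longrightarrow> v \<in> carrier_vec m \<Longrightarrow> i < n \<Longrightarrow> (A *\<^sub>v v) $ i = (\<Sum>j<m. A $$ (i,j) * v $ j)"
  by (auto simp: scalar_prod_def lessThan_atLeast0 intro!: sum.cong)

lemma mult_mat_index:
  "A \<in> carrier_mat n k \<Longrightarrow> B \<in> carrier_mat k m \<Longrightarrow> i < n \<Longrightarrow> j < m \<Longrightarrow>
   (A * B) $$ (i,j) = (\<Sum>l<k. A $$ (i,l) * B $$ (l,j))"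
  by (simp add: scalar_prod_def lessThan_atLeast0)

lemma cinner_adjoint:
  assumes A: "A \<in> carrier_mat n m" and u: "u \<in> carrier_vec n" and v: "v \<in> carrier_vec m"
  shows "cinner u (A *\<^sub>v v) = cinner (conj_transpose A *\<^sub>v u) v"
proof -
  have "cinner u (A *\<^sub>v v) = (\<Sum>i<n. \<Sum>j<m. cnj (u$i) * A $$ (i,j) * v $ j)"
    using u A v by (auto simp: cinner_def mult_mat_vec_index[OF A v] sum_distrib_left mult.assoc
        simp del: index_mult_mat_vec intro!: sum.cong)
  also have "\<dots> = (\<Sum>j<m. \<Sum>i<n. cnj (u$i) * A $$ (i,j) * v $ j)"
    by (rule sum.swap)
  also have "\<dots> = (\<Sum>j<m. cnj ((conj_transpose A *\<^sub>v u) $ j) * v $ j)"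
    using A u by (auto simp del: index_mult_mat_vec simp: sum_distrib_right sum_distrib_left mult_ac
        mult_mat_vec_index[OF conj_transpose_carrier[OF A] u] intro!: sum.cong)
  also have "\<dots> = cinner (conj_transpose A *\<^sub>v u) v"
    using A by (simp add: cinner_def)
  finally show ?thesis .
qed

lemma cinner_hermitian_real:
  assumes A: "A \<in> carrier_mat n n" and H: "conj_transpose A = A" and y: "y \<in> carrier_vec n"
  shows "cinner y (A *\<^sub>v y) = complex_of_real (Re (cinner y (A *\<^sub>v y)))"
proof -
  have "cinner y (A *\<^sub>v y) = cnj (cinner y (A *\<^sub>v y))"
    using cinner_adjoint[OF A y y] cinner_commute[of "A *\<^sub>v y" n y] A y H by simp
  then have "Im (cinner y (A *\<^sub>v y)) = 0"
    by (metis cnj.sel(2) equal_neg_zero)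
  then show ?thesis
    by (simp add: complex_eq_iff)
qed

lemma smult_mat_mult_vec:
  "A \<in> carrier_mat n m \<Longrightarrow> v \<in> carrier_vec m \<Longrightarrow> (c \<cdot>\<^sub>m A) *\<^sub>v v = c \<cdot>\<^sub>v (A *\<^sub>v (v :: 'a :: comm_ring_1 vec))"
  by (intro eq_vecI) auto

lemma cmat_carrier [simp]: "A \<in> carrier_mat n m \<Longrightarrow> cmat A \<in> carrier_mat n m"
  unfolding cmat_def by simp

lemma cmat_dim [simp]: "dim_row (cmat A) = dim_row A" "dim_col (cmat A) = dim_col A"
  unfolding cmat_def by auto

lemma cmat_index [simp]:
  "i < dim_row A \<Longrightarrow> j < dim_col A \<Longrightarrow> cmat A $$ (i,j) = complex_of_real (A $$ (i,j))"
  unfolding cmat_def by simp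

lemma cmat_mult: "A \<in> carrier_mat n k \<Longrightarrow> B \<in> carrier_mat k m \<Longrightarrow> cmat (A * B) = cmat A * cmat B"
  unfolding cmat_def by (rule of_real_hom.mat_hom_mult)

lemma cmat_one [simp]: "cmat (1\<^sub>m n) = 1\<^sub>m n"
  unfolding cmat_def by (rule eq_matI) auto

lemma cmat_smult: "cmat (c \<cdot>\<^sub>m A) = complex_of_real c \<cdot>\<^sub>m cmat A"
  unfolding cmat_def by (rule eq_matI) auto

lemma cmat_add: "A \<in> carrier_mat n m \<Longrightarrow> B \<in> carrier_mat n m \<Longrightarrow> cmat (A + B) = cmat A + cmat B"
  unfolding cmat_def by (rule eq_matI) auto

lemma conj_transpose_cmat: "conj_transpose (cmat A) = cmat (transpose_mat A)"
  unfolding cmat_def conj_transpose_def by (rule eq_matI) auto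

lemma cmat_mult_vec:
  "A \<in> carrier_mat n m \<Longrightarrow> v \<in> carrier_vec m \<Longrightarrow>
   cmat A *\<^sub>v map_vec complex_of_real v = map_vec complex_of_real (A *\<^sub>v v)"
  unfolding cmat_def by (rule of_real_hom.mult_mat_vec_hom[symmetric])

section \<open>Cauchy--Schwarz for positive semidefinite Hermitian forms\<close>

lemma quadratic_nonneg_imp_discriminant:
  fixes a b c :: real
  assumes nonneg: "\<And>t. 0 \<le> a - 2 * t * b + t\<^sup>2 * b * c" and "0 \<le> b" "0 \<le> c"
  shows "b \<le> a * c"
proof (cases "c = 0")
  case True
  have "b = 0"
  proof (rule ccontr)
    assume "b \<noteq> 0"
    then have "0 < b" using \<open>0 \<le> b\<close> by simp
    have "0 \<le> a - 2 * ((\<bar>a\<bar> + 1) / b) * b"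
      using nonneg[of "(\<bar>a\<bar> + 1) / b"] True by simp
    also have "\<dots> = a - 2 * (\<bar>a\<bar> + 1)"
      using \<open>0 < b\<close> by simp
    finally show False
      using abs_ge_self[of a] abs_ge_zero[of a] by (simp add: algebra_simps)
  qed
  then show ?thesis using True by simp
next
  case False
  then have "0 < c" using \<open>0 \<le> c\<close> by simp
  have "0 \<le> a - 2 * (1 / c) * b + (1 / c)\<^sup>2 * b * c" by (rule nonneg)
  also have "\<dots> = a - b / c"
    using \<open>0 < c\<close> by (simp add: power2_eq_square field_simps)
  finally show ?thesis
    using \<open>0 < c\<close> by (simp add: divide_le_eq mult.commute)
qed

lemma cinner_hermitian_swap:
  assumes A: "A \<in> carrier_mat n n" and H: "conj_transpose A = A"
    and x: "x \<in> carrier_vec n" and y: "y \<in> carrier_vec n"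
  shows "cinner y (A *\<^sub>v x) = cnj (cinner x (A *\<^sub>v y))"
  using cinner_adjoint[OF A y x] cinner_commute[OF mult_mat_vec_carrier[OF A y] x] H by simp

lemma cinner_form_add_smult:
  assumes A: "A \<in> carrier_mat n n" and x: "x \<in> carrier_vec n" and y: "y \<in> carrier_vec n"
  shows "cinner (x + k \<cdot>\<^sub>v y) (A *\<^sub>v (x + k \<cdot>\<^sub>v y))
       = cinner x (A *\<^sub>v x) + k * cinner x (A *\<^sub>v y) + cnj k * cinner y (A *\<^sub>v x)
         + cnj k * k * cinner y (A *\<^sub>v y)"
proof -
  have Ax: "A *\<^sub>v x \<in> carrier_vec n" and Aky: "k \<cdot>\<^sub>v (A *\<^sub>v y) \<in> carrier_vec n"
    using A x y by auto
  have Az: "A *\<^sub>v (x + k \<cdot>\<^sub>v y) = A *\<^sub>v x + k \<cdot>\<^sub>v (A *\<^sub>v y)"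
    using A x y by (simp add: mult_add_distrib_mat_vec mult_mat_vec)
  have "\<And>z. z \<in> carrier_vec n \<Longrightarrow> cinner z (A *\<^sub>v x + k \<cdot>\<^sub>v (A *\<^sub>v y)) = cinner z (A *\<^sub>v x) + k * cinner z (A *\<^sub>v y)"
    using A y by (simp add: cinner_add_right[OF Ax Aky] cinner_smult_right)
  then show ?thesis
    unfolding Az using x y Ax Aky
    by (simp add: cinner_add_left cinner_smult_left algebra_simps)
qed

lemma cauchy_schwarz_psd:
  assumes A: "A \<in> carrier_mat n n" and H: "conj_transpose A = A"
    and psd: "\<And>z. z \<in> carrier_vec n \<Longrightarrow> 0 \<le> Re (cinner z (A *\<^sub>v z))"
    and x: "x \<in> carrier_vec n" and y: "y \<in> carrier_vec n"
  shows "(cmod (cinner x (A *\<^sub>v y)))\<^sup>2 \<le> Re (cinner x (A *\<^sub>v x)) * Re (cinner y (A *\<^sub>v y))"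
proof -
  define b where "b = cinner x (A *\<^sub>v y)"
  define a where "a = Re (cinner x (A *\<^sub>v x))"
  define c where "c = Re (cinner y (A *\<^sub>v y))"
  have bb: "b * cnj b = complex_of_real ((cmod b)\<^sup>2)"
    by (metis complex_norm_square)
  have ar: "cinner x (A *\<^sub>v x) = complex_of_real a" and cr: "cinner y (A *\<^sub>v y) = complex_of_real c"
    unfolding a_def c_def by (rule cinner_hermitian_real[OF A H x], rule cinner_hermitian_real[OF A H y])
  have "0 \<le> a - 2 * t * (cmod b)\<^sup>2 + t\<^sup>2 * (cmod b)\<^sup>2 * c" for t
  proof -
    \<comment> \<open>the quadratic form at \<open>x - t b\<^sup>* y\<close>\<close>
    define k where "k = - (complex_of_real t * cnj b)"
    have "k * b = - complex_of_real t * (b * cnj b)" "cnj k * cnj b = - complex_of_real t * (b * cnj b)"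
      "cnj k * k = complex_of_real (t\<^sup>2) * (b * cnj b)"
      unfolding k_def by (simp_all add: mult_ac power2_eq_square)
    then have "cinner (x + k \<cdot>\<^sub>v y) (A *\<^sub>v (x + k \<cdot>\<^sub>v y))
        = complex_of_real a - complex_of_real t * complex_of_real ((cmod b)\<^sup>2)
          - complex_of_real t * complex_of_real ((cmod b)\<^sup>2)
          + complex_of_real (t\<^sup>2) * complex_of_real ((cmod b)\<^sup>2) * complex_of_real c"
      unfolding cinner_form_add_smult[OF A x y] cinner_hermitian_swap[OF A H x y] b_def[symmetric] ar cr
      by (simp add: bb)
    also have "\<dots> = complex_of_real (a - 2 * t * (cmod b)\<^sup>2 + t\<^sup>2 * (cmod b)\<^sup>2 * c)"
      by (simp add: algebra_simps)
    finally show ?thesis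
      using psd[of "x + k \<cdot>\<^sub>v y"] x y by simp
  qed
  moreover have "0 \<le> c" unfolding c_def by (rule psd[OF y])
  ultimately show ?thesis
    using quadratic_nonneg_imp_discriminant[of a "(cmod b)\<^sup>2" c] unfolding a_def b_def c_def by simp
qed

lemma cauchy_schwarz:
  assumes "x \<in> carrier_vec n" "y \<in> carrier_vec n"
  shows "(cmod (cinner x y))\<^sup>2 \<le> cnorm2 x * cnorm2 y"
  using cauchy_schwarz_psd[OF one_carrier_mat _ _ assms] assms
  by (simp add: cinner_self cnorm2_nonneg)

lemma cinner_form_bound:
  assumes A: "A \<in> carrier_mat n n" and y: "y \<in> carrier_vec n"
  shows "cmod (cinner y (A *\<^sub>v y)) \<le> (\<Sum>i<n. \<Sum>j<n. cmod (A $$ (i,j))) * cnorm2 y"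
proof -
  have entry: "cmod (y$i) * cmod (y$j) \<le> cnorm2 y" if "i < n" "j < n" for i j
  proof -
    have "(cmod (y$i))\<^sup>2 \<le> cnorm2 y" "(cmod (y$j))\<^sup>2 \<le> cnorm2 y"
      unfolding cnorm2_def using y that by (auto intro!: member_le_sum)
    moreover have "2 * (cmod (y$i) * cmod (y$j)) \<le> (cmod (y$i))\<^sup>2 + (cmod (y$j))\<^sup>2"
      using sum_squares_bound[of "cmod (y$i)" "cmod (y$j)"] by (simp add: power2_eq_square)
    ultimately show ?thesis by linarith
  qed
  have "cinner y (A *\<^sub>v y) = (\<Sum>i<n. \<Sum>j<n. cnj (y$i) * (A $$ (i,j) * y $ j))"
    using y A by (auto simp del: index_mult_mat_vec simp: cinner_def mult_mat_vec_index[OF A y]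
        sum_distrib_left intro!: sum.cong)
  then have "cmod (cinner y (A *\<^sub>v y)) \<le> (\<Sum>i<n. \<Sum>j<n. cmod (cnj (y$i) * (A $$ (i,j) * y $ j)))"
    by (simp only:) (rule order_trans[OF norm_sum sum_mono[OF norm_sum]])
  also have "\<dots> \<le> (\<Sum>i<n. \<Sum>j<n. cmod (A $$ (i,j)) * cnorm2 y)"
  proof (intro sum_mono)
    fix i j assume "i \<in> {..<n}" "j \<in> {..<n}"
    then have "cmod (A $$ (i,j)) * (cmod (y$i) * cmod (y$j)) \<le> cmod (A $$ (i,j)) * cnorm2 y"
      using entry by (simp add: mult_left_mono)
    then show "cmod (cnj (y$i) * (A $$ (i,j) * y $ j)) \<le> cmod (A $$ (i,j)) * cnorm2 y"
      by (simp add: norm_mult mult_ac)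
  qed
  also have "\<dots> = (\<Sum>i<n. \<Sum>j<n. cmod (A $$ (i,j))) * cnorm2 y"
    by (simp add: sum_distrib_right)
  finally show ?thesis .
qed

lemma minv_eqI:
  fixes A B :: "'a::field mat"
  assumes A: "A \<in> carrier_mat n n" and B: "B \<in> carrier_mat n n"
    and "A * B = 1\<^sub>m n" and "B * A = 1\<^sub>m n"
  shows "minv A = B"
  unfolding minv_def
proof (rule the_equality)
  fix B' assume "B' \<in> carrier_mat (dim_row A) (dim_row A) \<and> A * B' = 1\<^sub>m (dim_row A) \<and> B' * A = 1\<^sub>m (dim_row A)"
  then have B': "B' \<in> carrier_mat n n" and "B' * A = 1\<^sub>m n" using A by auto
  have "B' = B' * (A * B)" using \<open>A * B = 1\<^sub>m n\<close> B' by simp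
  also have "\<dots> = (B' * A) * B" using assoc_mult_mat[OF B' A B] by simp
  finally show "B' = B" using \<open>B' * A = 1\<^sub>m n\<close> B by simp
qed (use assms in simp)

lemma minv_if_injective:
  fixes A :: "'a::field mat"
  assumes A: "A \<in> carrier_mat n n"
    and inj: "\<And>v. v \<in> carrier_vec n \<Longrightarrow> A *\<^sub>v v = 0\<^sub>v n \<Longrightarrow> v = 0\<^sub>v n"
  shows "minv A \<in> carrier_mat n n" "A * minv A = 1\<^sub>m n" "minv A * A = 1\<^sub>m n"
proof -
  have "det A \<noteq> 0" using det_0_iff_vec_prod_zero[OF A] inj by blast
  then have "A \<in> Units (ring_mat TYPE('a) n n)" by (rule det_non_zero_imp_unit[OF A])
  then obtain B where B: "B \<in> carrier_mat n n" "A * B = 1\<^sub>m n" "B * A = 1\<^sub>m n"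
    unfolding Units_def ring_mat_def by auto
  with minv_eqI[OF A B] show "minv A \<in> carrier_mat n n" "A * minv A = 1\<^sub>m n" "minv A * A = 1\<^sub>m n"
    by simp_all
qed

section \<open>The bottom of the numerical range of a Hermitian matrix\<close>

definition rayleigh_bottom :: "complex mat \<Rightarrow> real" where
  "rayleigh_bottom A = Inf {Re (cinner w (A *\<^sub>v w)) | w. w \<in> carrier_vec (dim_col A) \<and> cnorm2 w = 1}"

lemma rayleigh_bottom_le:
  assumes A: "A \<in> carrier_mat n n" and w: "w \<in> carrier_vec n"
  shows "rayleigh_bottom A * cnorm2 w \<le> Re (cinner w (A *\<^sub>v w))"
proof (cases "w = 0\<^sub>v n")
  case True
  then show ?thesis using A by (simp add: cnorm2_def cinner_def)
next
  case False
  define R where "R = {Re (cinner w (A *\<^sub>v w)) | w. w \<in> carrier_vec n \<and> cnorm2 w = 1}"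
  have "bdd_below R"
  proof
    fix r assume "r \<in> R"
    then obtain v where v: "v \<in> carrier_vec n" "cnorm2 v = 1" and r: "r = Re (cinner v (A *\<^sub>v v))"
      unfolding R_def by blast
    have "cmod (cinner v (A *\<^sub>v v)) \<le> (\<Sum>i<n. \<Sum>j<n. cmod (A $$ (i,j)))"
      using cinner_form_bound[OF A v(1)] v(2) by simp
    then show "- (\<Sum>i<n. \<Sum>j<n. cmod (A $$ (i,j))) \<le> r"
      unfolding r using abs_Re_le_cmod[of "cinner v (A *\<^sub>v v)"] by linarith
  qed
  define s where "s = cnorm2 w"
  have s: "0 < s" unfolding s_def using cnorm2_pos[OF w False] .
  define c where "c = complex_of_real (1 / sqrt s)"
  have "cnorm2 (c \<cdot>\<^sub>v w) = 1"
    unfolding cnorm2_smult c_def s_def[symmetric] using s by (simp add: norm_divide power_divide)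
  moreover have "c \<cdot>\<^sub>v w \<in> carrier_vec n"
    using w by simp
  ultimately have "Re (cinner (c \<cdot>\<^sub>v w) (A *\<^sub>v (c \<cdot>\<^sub>v w))) \<in> R"
    unfolding R_def by blast
  moreover have "rayleigh_bottom A = Inf R"
    unfolding rayleigh_bottom_def R_def using A by simp
  ultimately have "rayleigh_bottom A \<le> Re (cinner (c \<cdot>\<^sub>v w) (A *\<^sub>v (c \<cdot>\<^sub>v w)))"
    using cInf_lower \<open>bdd_below R\<close> by metis
  also have "\<dots> = Re (cinner w (A *\<^sub>v w)) / s"
    unfolding cinner_smult_left mult_mat_vec[OF A w] cinner_smult_right[OF w mult_mat_vec_carrier[OF A w]]
    using s by (simp add: c_def)
  finally show ?thesis
    unfolding s_def[symmetric] using s by (simp add: le_divide_eq)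
qed

lemma rayleigh_bottom_approx:
  assumes A: "A \<in> carrier_mat n n" and "0 < n" and "0 < e"
  shows "\<exists>w \<in> carrier_vec n. cnorm2 w = 1 \<and> Re (cinner w (A *\<^sub>v w)) < rayleigh_bottom A + e"
proof -
  define R where "R = {Re (cinner w (A *\<^sub>v w)) | w. w \<in> carrier_vec n \<and> cnorm2 w = 1}"
  have "R \<noteq> {}"
    unfolding R_def using \<open>0 < n\<close> cnorm2_unit_vec[of 0 n] unit_vec_carrier[of n 0] by blast
  moreover have "rayleigh_bottom A = Inf R"
    unfolding rayleigh_bottom_def R_def using A by simp
  ultimately obtain r where "r \<in> R" "r < rayleigh_bottom A + e"
    using cInf_lessD[of R "rayleigh_bottom A + e"] \<open>0 < e\<close> by auto
  then show ?thesis unfolding R_def by blast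
qed

text \<open>With \<open>x = M w\<close>, Cauchy--Schwarz for the form of \<open>M\<close> bounds \<open>|x|\<^sup>2\<close> by a multiple
  of \<open><w, M w>\<close>, while \<open>1 = |N x|\<^sup>2\<close> is bounded by a multiple of \<open>|x|\<^sup>2\<close>.\<close>

lemma invertible_psd_coercive:
  assumes M: "M \<in> carrier_mat n n" and H: "conj_transpose M = M"
    and psd: "\<And>z. z \<in> carrier_vec n \<Longrightarrow> 0 \<le> Re (cinner z (M *\<^sub>v z))"
    and N: "N \<in> carrier_mat n n" and NM: "N * M = 1\<^sub>m n"
  obtains C where "0 < C" "\<And>w. w \<in> carrier_vec n \<Longrightarrow> cnorm2 w = 1 \<Longrightarrow> 1 \<le> C * Re (cinner w (M *\<^sub>v w))"
proof
  define P where "P = conj_transpose N * N"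
  have P: "P \<in> carrier_mat n n" unfolding P_def by (rule mult_carrier_mat[OF conj_transpose_carrier[OF N] N])
  define K1 where "K1 = (\<Sum>i<n. \<Sum>j<n. cmod (M $$ (i,j)))"
  define K2 where "K2 = (\<Sum>i<n. \<Sum>j<n. cmod (P $$ (i,j)))"
  have "0 \<le> K1" "0 \<le> K2" unfolding K1_def K2_def by (simp_all add: sum_nonneg)
  then show "0 < K2 * K1 + 1" by (simp add: add_nonneg_pos)
  fix w assume w: "w \<in> carrier_vec n" and w1: "cnorm2 w = 1"
  define x where "x = M *\<^sub>v w"
  have x: "x \<in> carrier_vec n" unfolding x_def using M w by simp
  define Q where "Q = Re (cinner w (M *\<^sub>v w))"
  have "0 \<le> Q" unfolding Q_def by (rule psd[OF w])
  have "cinner w (M *\<^sub>v x) = complex_of_real (cnorm2 x)"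
    unfolding x_def using cinner_adjoint[OF M w x] H x_def by (simp add: cinner_self)
  then have "(cnorm2 x)\<^sup>2 \<le> Q * Re (cinner x (M *\<^sub>v x))"
    using cauchy_schwarz_psd[OF M H psd w x] unfolding Q_def by simp
  also have "\<dots> \<le> Q * (K1 * cnorm2 x)"
    using cinner_form_bound[OF M x] complex_Re_le_cmod[of "cinner x (M *\<^sub>v x)"] \<open>0 \<le> Q\<close>
    unfolding K1_def by (intro mult_left_mono) auto
  finally have "cnorm2 x * cnorm2 x \<le> (K1 * Q) * cnorm2 x"
    by (simp add: power2_eq_square mult_ac)
  then have x_bound: "cnorm2 x \<le> K1 * Q"
    using cnorm2_nonneg[of x] \<open>0 \<le> K1\<close> \<open>0 \<le> Q\<close>
    by (cases "cnorm2 x = 0") (auto simp: mult_le_cancel_right)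
  have "N *\<^sub>v x = w"
    unfolding x_def using assoc_mult_mat_vec[OF N M w, symmetric] NM w by simp
  then have "1 = Re (cinner x (P *\<^sub>v x))"
    using w1 cinner_adjoint[OF conj_transpose_carrier[OF N] x mult_mat_vec_carrier[OF N x]]
      assoc_mult_mat_vec[OF conj_transpose_carrier[OF N] N x]
    by (simp add: P_def cinner_self)
  also have "\<dots> \<le> K2 * cnorm2 x"
    using cinner_form_bound[OF P x] complex_Re_le_cmod[of "cinner x (P *\<^sub>v x)"] unfolding K2_def by linarith
  also have "\<dots> \<le> K2 * (K1 * Q)"
    using x_bound \<open>0 \<le> K2\<close> by (rule mult_left_mono)
  also have "\<dots> \<le> (K2 * K1 + 1) * Q"
    using \<open>0 \<le> Q\<close> by (simp add: algebra_simps)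
  finally show "1 \<le> (K2 * K1 + 1) * Re (cinner w (M *\<^sub>v w))"
    unfolding Q_def .
qed

lemma psd_kernel_if_not_coercive:
  assumes M: "M \<in> carrier_mat n n" and H: "conj_transpose M = M"
    and psd: "\<And>z. z \<in> carrier_vec n \<Longrightarrow> 0 \<le> Re (cinner z (M *\<^sub>v z))"
    and small: "\<And>e. 0 < e \<Longrightarrow> \<exists>w \<in> carrier_vec n. cnorm2 w = 1 \<and> Re (cinner w (M *\<^sub>v w)) < e"
  shows "\<exists>w \<in> carrier_vec n. w \<noteq> 0\<^sub>v n \<and> M *\<^sub>v w = 0\<^sub>v n"
proof (rule ccontr)
  assume "\<not> ?thesis"
  then have "minv M \<in> carrier_mat n n" "minv M * M = 1\<^sub>m n"
    using minv_if_injective[OF M] by blast+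
  then obtain C where "0 < C" and C: "\<And>w. w \<in> carrier_vec n \<Longrightarrow> cnorm2 w = 1 \<Longrightarrow> 1 \<le> C * Re (cinner w (M *\<^sub>v w))"
    using invertible_psd_coercive[OF M H psd] by blast
  obtain w where w: "w \<in> carrier_vec n" "cnorm2 w = 1" and "Re (cinner w (M *\<^sub>v w)) < 1 / C"
    using small[of "1 / C"] \<open>0 < C\<close> by auto
  then have "C * Re (cinner w (M *\<^sub>v w)) < 1"
    using \<open>0 < C\<close> by (simp add: field_simps)
  with C[OF w] show False by simp
qed

section \<open>The least eigenvalue of a real symmetric matrix\<close>

lemma finite_eigenvalues:
  fixes A :: "'a::field mat"
  assumes "A \<in> carrier_mat n n"
  shows "finite {k. eigenvalue A k}"
proof -
  have "char_poly A \<noteq> 0" using degree_monic_char_poly[OF assms] by auto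
  then show ?thesis
    using poly_roots_finite eigenvalue_root_char_poly[OF assms] by simp
qed

lemma map_vec_Re_cmat_mult_vec:
  "L \<in> carrier_mat n m \<Longrightarrow> w \<in> carrier_vec m \<Longrightarrow> map_vec Re (cmat L *\<^sub>v w) = L *\<^sub>v map_vec Re w"
  by (intro eq_vecI) (auto simp: scalar_prod_def)

lemma map_vec_Im_cmat_mult_vec:
  "L \<in> carrier_mat n m \<Longrightarrow> w \<in> carrier_vec m \<Longrightarrow> map_vec Im (cmat L *\<^sub>v w) = L *\<^sub>v map_vec Im w"
  by (intro eq_vecI) (auto simp: scalar_prod_def)

lemma eigenvalue_if_cmat_eigenvector:
  assumes L: "L \<in> carrier_mat n n" and w: "w \<in> carrier_vec n" "w \<noteq> 0\<^sub>v n"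
    and Lw: "cmat L *\<^sub>v w = complex_of_real \<mu> \<cdot>\<^sub>v w"
  shows "eigenvalue L \<mu>"
proof -
  have "map_vec Re w \<noteq> 0\<^sub>v n \<or> map_vec Im w \<noteq> 0\<^sub>v n"
  proof (rule ccontr)
    assume "\<not> ?thesis"
    then have "w $ i = 0" if "i < n" for i
      using that w(1) by (auto simp: complex_eq_iff dest!: arg_cong[of _ _ "\<lambda>v. v $ i"])
    with w show False by auto
  qed
  moreover have "L *\<^sub>v map_vec Re w = \<mu> \<cdot>\<^sub>v map_vec Re w" "L *\<^sub>v map_vec Im w = \<mu> \<cdot>\<^sub>v map_vec Im w"
    using arg_cong[OF Lw, of "map_vec Re"] arg_cong[OF Lw, of "map_vec Im"] w(1)
    by (auto simp: map_vec_Re_cmat_mult_vec[OF L w(1)] map_vec_Im_cmat_mult_vec[OF L w(1)])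
  moreover have "map_vec Re w \<in> carrier_vec n" "map_vec Im w \<in> carrier_vec n"
    using w(1) by auto
  ultimately show ?thesis
    unfolding eigenvalue_def eigenvector_def using L by blast
qed

text \<open>No compactness argument is needed: at the bottom \<open>\<mu>\<close> of the numerical range the form of
  \<open>A - \<mu> I\<close> is positive semidefinite but not coercive, hence \<open>A - \<mu> I\<close> is singular.\<close>

lemma rayleigh_bottom_eigenvector:
  assumes A: "A \<in> carrier_mat n n" and H: "conj_transpose A = A" and "0 < n"
  obtains x where "x \<in> carrier_vec n" "x \<noteq> 0\<^sub>v n" "A *\<^sub>v x = complex_of_real (rayleigh_bottom A) \<cdot>\<^sub>v x"
proof -
  define \<mu> where "\<mu> = rayleigh_bottom A"
  define M where "M = A - complex_of_real \<mu> \<cdot>\<^sub>m 1\<^sub>m n"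
  have M: "M \<in> carrier_mat n n" unfolding M_def by (rule minus_carrier_mat) simp
  have Mw: "M *\<^sub>v w = A *\<^sub>v w - complex_of_real \<mu> \<cdot>\<^sub>v w" if "w \<in> carrier_vec n" for w
    unfolding M_def using A that
    by (simp add: minus_mult_distrib_mat_vec[OF A _ that] smult_mat_mult_vec[OF one_carrier_mat that])
  have M_form: "Re (cinner w (M *\<^sub>v w)) = Re (cinner w (A *\<^sub>v w)) - \<mu> * cnorm2 w"
    if w: "w \<in> carrier_vec n" for w
    using cinner_diff_right[OF mult_mat_vec_carrier[OF A w] _ w, of "complex_of_real \<mu> \<cdot>\<^sub>v w"]
      cinner_smult_right[OF w w] w by (simp add: Mw cinner_self)
  have "conj_transpose M = M"
    unfolding M_def using A H by (simp add: conj_transpose_minus[of _ n n] conj_transpose_smult)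
  moreover have "0 \<le> Re (cinner w (M *\<^sub>v w))" if "w \<in> carrier_vec n" for w
    using M_form[OF that] rayleigh_bottom_le[OF A that] unfolding \<mu>_def by simp
  moreover have "\<exists>w \<in> carrier_vec n. cnorm2 w = 1 \<and> Re (cinner w (M *\<^sub>v w)) < e" if "0 < e" for e
    using rayleigh_bottom_approx[OF A \<open>0 < n\<close> that] M_form unfolding \<mu>_def by fastforce
  ultimately obtain x where x: "x \<in> carrier_vec n" "x \<noteq> 0\<^sub>v n" and "M *\<^sub>v x = 0\<^sub>v n"
    using psd_kernel_if_not_coercive[OF M] by blast
  have "A *\<^sub>v x = complex_of_real \<mu> \<cdot>\<^sub>v x"
  proof (rule eq_vecI)
    fix i assume "i < dim_vec (complex_of_real \<mu> \<cdot>\<^sub>v x)"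
    then have "i < n" using x by simp
    then have "(M *\<^sub>v x) $ i = 0" using \<open>M *\<^sub>v x = 0\<^sub>v n\<close> by simp
    then show "(A *\<^sub>v x) $ i = (complex_of_real \<mu> \<cdot>\<^sub>v x) $ i"
      using Mw[OF x(1)] \<open>i < n\<close> x(1) A by simp
  qed (use A x in simp)
  then show ?thesis
    using that x unfolding \<mu>_def by blast
qed

definition least_rayleigh :: "real mat \<Rightarrow> real \<Rightarrow> bool" where
  "least_rayleigh L \<mu> \<longleftrightarrow>
     (\<forall>w \<in> carrier_vec (dim_col L). \<mu> * cnorm2 w \<le> Re (cinner w (cmat L *\<^sub>v w))) \<and>
     (\<exists>x \<in> carrier_vec (dim_col L). x \<noteq> 0\<^sub>v (dim_col L) \<and> cmat L *\<^sub>v x = complex_of_real \<mu> \<cdot>\<^sub>v x)"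

theorem lam_min_least_rayleigh:
  assumes L: "L \<in> carrier_mat n n" and "0 < n" and sym: "transpose_mat L = L"
  shows "eigenvalue L (lam_min L)" "least_rayleigh L (lam_min L)"
proof -
  define \<mu> where "\<mu> = rayleigh_bottom (cmat L)"
  have Lc: "cmat L \<in> carrier_mat n n" using L by simp
  have rayleigh: "\<mu> * cnorm2 w \<le> Re (cinner w (cmat L *\<^sub>v w))" if "w \<in> carrier_vec n" for w
    unfolding \<mu>_def by (rule rayleigh_bottom_le[OF Lc that])
  have "conj_transpose (cmat L) = cmat L"
    unfolding conj_transpose_cmat sym ..
  then obtain x where x: "x \<in> carrier_vec n" "x \<noteq> 0\<^sub>v n" and Lx: "cmat L *\<^sub>v x = complex_of_real \<mu> \<cdot>\<^sub>v x"
    unfolding \<mu>_def by (rule rayleigh_bottom_eigenvector[OF Lc _ \<open>0 < n\<close>])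
  have ev: "eigenvalue L \<mu>"
    by (rule eigenvalue_if_cmat_eigenvector[OF L x Lx])
  have least: "\<mu> \<le> k" if k: "eigenvalue L k" for k
  proof -
    obtain v where "eigenvector L v k"
      using k unfolding eigenvalue_def by blast
    then have v: "eigenvector (cmat L) (map_vec complex_of_real v) (complex_of_real k)"
      unfolding cmat_def using of_real_hom.eigenvector_hom[OF L] by blast
    define vc where "vc = map_vec complex_of_real v"
    have vc: "vc \<in> carrier_vec n" "vc \<noteq> 0\<^sub>v n" "cmat L *\<^sub>v vc = complex_of_real k \<cdot>\<^sub>v vc"
      using v Lc unfolding vc_def eigenvector_def by auto
    then have "\<mu> * cnorm2 vc \<le> k * cnorm2 vc"
      using rayleigh[OF vc(1)] cinner_smult_right[OF vc(1) vc(1)] by (simp add: cinner_self)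
    then show ?thesis
      using cnorm2_pos[OF vc(1,2)] by simp
  qed
  have "lam_min L = \<mu>"
    unfolding lam_min_def using finite_eigenvalues[OF L] ev least by (intro Min_eqI) auto
  then show "eigenvalue L (lam_min L)" "least_rayleigh L (lam_min L)"
    unfolding least_rayleigh_def using ev rayleigh x Lx L by auto
qed

section \<open>Largest singular values and the \<open>H\<^sub>\<infinity>\<close> norm\<close>

lemma complex_eigenvalue_exists:
  fixes A :: "complex mat"
  assumes A: "A \<in> carrier_mat n n" and "0 < n"
  shows "\<exists>k. eigenvalue A k"
proof -
  have "degree (char_poly A) = n" using degree_monic_char_poly[OF A] by auto
  then have "\<not> constant (poly (char_poly A))" unfolding constant_degree using \<open>0 < n\<close> by simp
  then obtain z where "poly (char_poly A) z = 0" using fundamental_theorem_of_algebra by blast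
  then show ?thesis using eigenvalue_root_char_poly[OF A] by blast
qed

lemma cnorm2_adjoint_mult_vec:
  assumes S: "S \<in> carrier_mat m p" and u: "u \<in> carrier_vec m"
  shows "cnorm2 (conj_transpose S *\<^sub>v u) = Re (cinner u ((S * conj_transpose S) *\<^sub>v u))"
  using cinner_adjoint[OF S u mult_mat_vec_carrier[OF conj_transpose_carrier[OF S] u]]
    assoc_mult_mat_vec[OF S conj_transpose_carrier[OF S] u]
  by (simp add: cinner_self)

lemma gram_eigenvalue_le:
  assumes S: "S \<in> carrier_mat m p" and "0 \<le> G"
    and bound: "\<And>u. u \<in> carrier_vec m \<Longrightarrow> cnorm2 (conj_transpose S *\<^sub>v u) \<le> G * cnorm2 u"
    and k: "eigenvalue (conj_transpose S * S) k"
  shows "k = complex_of_real (Re k)" "Re k \<le> G"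
proof -
  have SH: "conj_transpose S \<in> carrier_mat p m" using S by simp
  obtain v where v: "v \<in> carrier_vec p" "v \<noteq> 0\<^sub>v p" and Hv: "(conj_transpose S * S) *\<^sub>v v = k \<cdot>\<^sub>v v"
    using k S unfolding eigenvalue_def eigenvector_def by auto
  define u where "u = S *\<^sub>v v"
  have u: "u \<in> carrier_vec m" unfolding u_def using S v by simp
  have SHu: "conj_transpose S *\<^sub>v u = k \<cdot>\<^sub>v v"
    unfolding u_def using assoc_mult_mat_vec[OF SH S v(1)] Hv by simp
  have "k * complex_of_real (cnorm2 v) = cinner v (conj_transpose S *\<^sub>v u)"
    unfolding SHu cinner_smult_right[OF v(1) v(1)] cinner_self ..
  also have "\<dots> = complex_of_real (cnorm2 u)"
    using cinner_adjoint[OF SH v(1) u] unfolding u_def by (simp add: cinner_self)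
  finally have k_eq: "k = complex_of_real (cnorm2 u / cnorm2 v)"
    using cnorm2_pos[OF v] by (simp add: field_simps)
  define r where "r = cnorm2 u / cnorm2 v"
  have "0 \<le> r" unfolding r_def using cnorm2_nonneg[of u] cnorm2_nonneg[of v] by simp
  have "cnorm2 (conj_transpose S *\<^sub>v u) = r\<^sup>2 * cnorm2 v"
    unfolding SHu cnorm2_smult k_eq r_def[symmetric] using \<open>0 \<le> r\<close> by simp
  moreover have "cnorm2 u = r * cnorm2 v"
    unfolding r_def using cnorm2_pos[OF v] by simp
  ultimately have "r * (r * cnorm2 v) \<le> r * (G * cnorm2 v)"
    using bound[OF u] by (simp add: power2_eq_square mult_ac)
  then have "r \<le> G"
    using cnorm2_pos[OF v] \<open>0 \<le> G\<close> by (cases "r = 0") (auto simp: mult_le_cancel_left)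
  then show "k = complex_of_real (Re k)" "Re k \<le> G"
    using k_eq r_def by simp_all
qed

lemma sigma_max_le:
  assumes S: "S \<in> carrier_mat m p" and "0 < p" and "0 \<le> G"
    and bound: "\<And>u. u \<in> carrier_vec m \<Longrightarrow> cnorm2 (conj_transpose S *\<^sub>v u) \<le> G * cnorm2 u"
  shows "sigma_max S \<le> sqrt G"
proof -
  have H: "conj_transpose S * S \<in> carrier_mat p p" using mult_carrier_mat[OF conj_transpose_carrier[OF S] S] .
  have "Max (Re ` {k. eigenvalue (conj_transpose S * S) k}) \<le> G"
    using finite_eigenvalues[OF H] complex_eigenvalue_exists[OF H \<open>0 < p\<close>]
      gram_eigenvalue_le(2)[OF S \<open>0 \<le> G\<close> bound] by (intro Max.boundedI) auto
  then show ?thesis unfolding sigma_max_def by simp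
qed

lemma sigma_max_eqI:
  assumes S: "S \<in> carrier_mat m p" and "0 < p" and "0 \<le> G"
    and bound: "\<And>u. u \<in> carrier_vec m \<Longrightarrow> cnorm2 (conj_transpose S *\<^sub>v u) \<le> G * cnorm2 u"
    and x: "x \<in> carrier_vec m" "x \<noteq> 0\<^sub>v m"
    and Sx: "S *\<^sub>v (conj_transpose S *\<^sub>v x) = complex_of_real G \<cdot>\<^sub>v x"
  shows "sigma_max S = sqrt G"
proof -
  define H where "H = conj_transpose S * S"
  have SH: "conj_transpose S \<in> carrier_mat p m" using S by simp
  have H: "H \<in> carrier_mat p p" unfolding H_def using mult_carrier_mat[OF SH S] .
  have "eigenvalue H (complex_of_real G)"
  proof (cases "conj_transpose S *\<^sub>v x = 0\<^sub>v p")
    case False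
    have "H *\<^sub>v (conj_transpose S *\<^sub>v x) = complex_of_real G \<cdot>\<^sub>v (conj_transpose S *\<^sub>v x)"
      unfolding H_def using assoc_mult_mat_vec[OF SH S mult_mat_vec_carrier[OF SH x(1)]] Sx
        mult_mat_vec[OF SH x(1)] by simp
    then show ?thesis
      unfolding eigenvalue_def eigenvector_def using False H mult_mat_vec_carrier[OF SH x(1)]
      by (intro exI[of _ "conj_transpose S *\<^sub>v x"]) auto
  next
    case True
    \<comment> \<open>then \<open>G = 0\<close> and \<open>S\<^sup>H = 0\<close>, so every vector is an eigenvector\<close>
    have "S *\<^sub>v 0\<^sub>v p = 0\<^sub>v m"
      using S by (intro eq_vecI) (auto simp: scalar_prod_def)
    then have "complex_of_real G \<cdot>\<^sub>v x = 0\<^sub>v m"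
      using Sx True by simp
    then have "cnorm2 (complex_of_real G \<cdot>\<^sub>v x) = 0"
      by (simp add: cnorm2_def)
    then have "G = 0"
      using cnorm2_pos[OF x] by (simp add: cnorm2_smult)
    then have SH0: "conj_transpose S *\<^sub>v u = 0\<^sub>v p" if u: "u \<in> carrier_vec m" for u
      using bound[OF u] cnorm2_nonneg[of "conj_transpose S *\<^sub>v u"]
        cnorm2_eq_0_iff[of "conj_transpose S *\<^sub>v u" p] SH u by simp
    have "H *\<^sub>v unit_vec p 0 = complex_of_real G \<cdot>\<^sub>v unit_vec p 0"
      unfolding H_def \<open>G = 0\<close> using assoc_mult_mat_vec[OF SH S, of "unit_vec p 0"] SH0[of "S *\<^sub>v unit_vec p 0"] S
      by (intro eq_vecI) auto
    moreover have "unit_vec p 0 \<noteq> 0\<^sub>v p"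
      using \<open>0 < p\<close> by (auto dest!: arg_cong[of _ _ "\<lambda>v. v $ 0"])
    ultimately show ?thesis
      unfolding eigenvalue_def eigenvector_def using H by (intro exI[of _ "unit_vec p 0"]) auto
  qed
  then have "Max (Re ` {k. eigenvalue H k}) = G"
    using finite_eigenvalues[OF H] gram_eigenvalue_le(2)[OF S \<open>0 \<le> G\<close> bound]
    unfolding H_def by (intro Max_eqI) force+
  then show ?thesis unfolding sigma_max_def H_def by simp
qed

lemma hinf_norm_eqI:
  assumes "\<And>\<omega>. sigma_max (\<Phi> (\<i> * complex_of_real \<omega>)) \<le> M" and "sigma_max (\<Phi> 0) = M"
  shows "hinf_norm \<Phi> = M"
  unfolding hinf_norm_def
proof (rule cSup_eq_maximum)
  show "M \<in> range (\<lambda>\<omega>. sigma_max (\<Phi> (\<i> * complex_of_real \<omega>)))"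
    using assms(2) by (intro range_eqI[of _ _ 0]) simp
next
  fix y assume "y \<in> range (\<lambda>\<omega>. sigma_max (\<Phi> (\<i> * complex_of_real \<omega>)))"
  then show "y \<le> M" using assms(1) by blast
qed

section \<open>Transfer matrices of a shifted symmetric positive definite matrix\<close>

locale sym_pos_def =
  fixes m :: nat and L :: "real mat" and \<mu> :: real
  assumes carrier: "L \<in> carrier_mat m m" and symmetric: "transpose_mat L = L"
    and least: "least_rayleigh L \<mu>" and pos: "0 < \<mu>"
begin

lemma cmat_carrier_L: "cmat L \<in> carrier_mat m m"
  using carrier by simp

lemma hermitian: "conj_transpose (cmat L) = cmat L"
  unfolding conj_transpose_cmat symmetric ..

lemma rayleigh: "w \<in> carrier_vec m \<Longrightarrow> \<mu> * cnorm2 w \<le> Re (cinner w (cmat L *\<^sub>v w))"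
  using least carrier unfolding least_rayleigh_def by auto

lemma eigenvector:
  obtains x where "x \<in> carrier_vec m" "x \<noteq> 0\<^sub>v m" "cmat L *\<^sub>v x = complex_of_real \<mu> \<cdot>\<^sub>v x"
  using least carrier unfolding least_rayleigh_def by auto

lemma dim_pos: "0 < m"
proof -
  obtain x where x: "x \<in> carrier_vec m" "x \<noteq> 0\<^sub>v m" "cmat L *\<^sub>v x = complex_of_real \<mu> \<cdot>\<^sub>v x"
    by (rule eigenvector)
  show ?thesis
  proof (rule ccontr)
    assume "\<not> 0 < m"
    then have "x = 0\<^sub>v m"
      using x(1) by (intro eq_vecI) simp_all
    with x(2) show False
      by contradiction
  qed
qed

lemma form_Im:
  assumes "y \<in> carrier_vec m"
  shows "Im (cinner y (cmat L *\<^sub>v y)) = 0"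
proof -
  have "Im (cinner y (cmat L *\<^sub>v y)) = Im (complex_of_real (Re (cinner y (cmat L *\<^sub>v y))))"
    using cinner_hermitian_real[OF cmat_carrier_L hermitian assms] by (rule arg_cong)
  then show ?thesis
    by (simp only: Im_complex_of_real)
qed

lemma rayleigh_image:
  assumes y: "y \<in> carrier_vec m"
  shows "\<mu> * Re (cinner y (cmat L *\<^sub>v y)) \<le> cnorm2 (cmat L *\<^sub>v y)"
proof -
  define q where "q = Re (cinner y (cmat L *\<^sub>v y))"
  define N where "N = cnorm2 (cmat L *\<^sub>v y)"
  have Ly: "cmat L *\<^sub>v y \<in> carrier_vec m" using cmat_carrier_L y by simp
  have "q\<^sup>2 \<le> (cmod (cinner y (cmat L *\<^sub>v y)))\<^sup>2"
    using power_mono[OF abs_Re_le_cmod[of "cinner y (cmat L *\<^sub>v y)"] abs_ge_zero, of 2]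
    unfolding q_def by simp
  also have "\<dots> \<le> cnorm2 y * N"
    unfolding N_def by (rule cauchy_schwarz[OF y Ly])
  finally have cs: "q\<^sup>2 \<le> cnorm2 y * N" .
  show "\<mu> * q \<le> N"
  proof (cases "0 < q")
    case True
    have "q * (\<mu> * q) = \<mu> * q\<^sup>2" by (simp add: power2_eq_square)
    also have "\<dots> \<le> (\<mu> * cnorm2 y) * N"
      using mult_left_mono[OF cs] pos by (simp add: mult.assoc)
    also have "\<dots> \<le> q * N"
      using rayleigh[OF y] cnorm2_nonneg unfolding q_def N_def by (rule mult_right_mono)
    finally show ?thesis using True by simp
  next
    case False
    then have "\<mu> * q \<le> 0" using pos by (simp add: mult_nonneg_nonpos)
    then show ?thesis using cnorm2_nonneg[of "cmat L *\<^sub>v y"] unfolding N_def by linarith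
  qed
qed

lemma norm_image:
  assumes y: "y \<in> carrier_vec m"
  shows "\<mu>\<^sup>2 * cnorm2 y \<le> cnorm2 (cmat L *\<^sub>v y)"
proof -
  have "\<mu>\<^sup>2 * cnorm2 y = \<mu> * (\<mu> * cnorm2 y)" by (simp add: power2_eq_square)
  also have "\<dots> \<le> \<mu> * Re (cinner y (cmat L *\<^sub>v y))"
    using rayleigh[OF y] pos by simp
  also have "\<dots> \<le> cnorm2 (cmat L *\<^sub>v y)"
    by (rule rayleigh_image[OF y])
  finally show ?thesis .
qed

abbreviation shifted :: "complex \<Rightarrow> complex mat" where
  "shifted s \<equiv> s \<cdot>\<^sub>m 1\<^sub>m m + cmat L"

lemma shifted_carrier: "shifted s \<in> carrier_mat m m"
  using cmat_carrier_L by simp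

lemma shifted_zero: "shifted 0 = cmat L"
  by (rule eq_matI) (use carrier in auto)

lemma shifted_mult_vec: "y \<in> carrier_vec m \<Longrightarrow> shifted s *\<^sub>v y = s \<cdot>\<^sub>v y + cmat L *\<^sub>v y"
  using add_mult_distrib_mat_vec[OF smult_carrier_mat[OF one_carrier_mat] cmat_carrier_L]
  by (simp add: smult_mat_mult_vec[OF one_carrier_mat])

lemma shifted_adjoint: "conj_transpose (shifted s) = shifted (cnj s)"
  using conj_transpose_add[OF smult_carrier_mat[OF one_carrier_mat] cmat_carrier_L]
  by (simp add: conj_transpose_smult hermitian)

lemma shifted_injective:
  assumes s: "Re s = 0" and y: "y \<in> carrier_vec m" and Ky: "shifted s *\<^sub>v y = 0\<^sub>v m"
  shows "y = 0\<^sub>v m"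
proof (rule ccontr)
  assume "y \<noteq> 0\<^sub>v m"
  have Ly: "cmat L *\<^sub>v y \<in> carrier_vec m" using cmat_carrier_L y by simp
  have "cinner y (shifted s *\<^sub>v y) = s * complex_of_real (cnorm2 y) + cinner y (cmat L *\<^sub>v y)"
    unfolding shifted_mult_vec[OF y] cinner_add_right[OF smult_carrier_vec[THEN iffD2, OF y] Ly y]
      cinner_smult_right[OF y y] cinner_self ..
  moreover have "cinner y (shifted s *\<^sub>v y) = 0"
    unfolding Ky using y cinner_zero_right[of y] by simp
  ultimately have "Re (s * complex_of_real (cnorm2 y) + cinner y (cmat L *\<^sub>v y)) = 0"
    by simp
  then have "Re (cinner y (cmat L *\<^sub>v y)) = 0"
    using s by simp
  then show False
    using rayleigh[OF y] mult_pos_pos[OF pos cnorm2_pos[OF y \<open>y \<noteq> 0\<^sub>v m\<close>]] by simp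
qed

lemma minv_shifted:
  assumes "Re s = 0"
  shows "minv (shifted s) \<in> carrier_mat m m" "shifted s * minv (shifted s) = 1\<^sub>m m"
    "minv (shifted s) * shifted s = 1\<^sub>m m"
  using minv_if_injective[OF shifted_carrier shifted_injective[OF assms]] by blast+

lemma conj_transpose_minv_shifted:
  assumes "Re s = 0"
  shows "conj_transpose (minv (shifted s)) = minv (shifted (cnj s))"
proof -
  note R = minv_shifted[OF assms]
  have "shifted (cnj s) * conj_transpose (minv (shifted s)) = 1\<^sub>m m"
    using conj_transpose_mult[OF R(1) shifted_carrier, of s] R(3) by (simp add: shifted_adjoint)
  moreover have "conj_transpose (minv (shifted s)) * shifted (cnj s) = 1\<^sub>m m"
    using conj_transpose_mult[OF shifted_carrier R(1), of s] R(2) by (simp add: shifted_adjoint)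
  ultimately show ?thesis
    using R(1) by (intro minv_eqI[OF shifted_carrier, symmetric]) auto
qed

lemma shifted_minv_mult_vec:
  assumes "Re s = 0" and u: "u \<in> carrier_vec m"
  shows "shifted s *\<^sub>v (minv (shifted s) *\<^sub>v u) = u"
  using assoc_mult_mat_vec[OF shifted_carrier[of s] minv_shifted(1)[OF assms(1)] u] minv_shifted(2)[OF assms(1)] u
  by simp

lemma gram_mult_vec:
  assumes B: "B \<in> carrier_mat m p" and BB: "B * transpose_mat B = a \<cdot>\<^sub>m L + b \<cdot>\<^sub>m (L * L)"
    and y: "y \<in> carrier_vec m"
  shows "(cmat B * conj_transpose (cmat B)) *\<^sub>v y
    = complex_of_real a \<cdot>\<^sub>v (cmat L *\<^sub>v y) + complex_of_real b \<cdot>\<^sub>v (cmat L *\<^sub>v (cmat L *\<^sub>v y))"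
proof -
  note LL = mult_carrier_mat[OF carrier carrier]
  have "cmat B * conj_transpose (cmat B) = complex_of_real a \<cdot>\<^sub>m cmat L + complex_of_real b \<cdot>\<^sub>m (cmat L * cmat L)"
    unfolding conj_transpose_cmat cmat_mult[OF B transpose_carrier_mat[THEN iffD2, OF B], symmetric] BB
      cmat_add[OF smult_carrier_mat[OF carrier] smult_carrier_mat[OF LL]] cmat_smult cmat_mult[OF carrier carrier] ..
  then show ?thesis
    using add_mult_distrib_mat_vec[OF smult_carrier_mat[OF cmat_carrier_L] smult_carrier_mat[OF cmat_carrier[OF LL]] y]
      smult_mat_mult_vec[OF cmat_carrier_L y] smult_mat_mult_vec[OF cmat_carrier[OF LL] y]
      assoc_mult_mat_vec[OF cmat_carrier_L cmat_carrier_L y]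
    by (simp add: cmat_mult[OF carrier carrier])
qed

lemma gram_form:
  assumes B: "B \<in> carrier_mat m p" and BB: "B * transpose_mat B = a \<cdot>\<^sub>m L + b \<cdot>\<^sub>m (L * L)"
    and y: "y \<in> carrier_vec m"
  shows "cnorm2 (conj_transpose (cmat B) *\<^sub>v y) = a * Re (cinner y (cmat L *\<^sub>v y)) + b * cnorm2 (cmat L *\<^sub>v y)"
proof -
  have Ly: "cmat L *\<^sub>v y \<in> carrier_vec m" and LLy: "cmat L *\<^sub>v (cmat L *\<^sub>v y) \<in> carrier_vec m"
    using cmat_carrier_L y by simp_all
  have "cinner y (cmat L *\<^sub>v (cmat L *\<^sub>v y)) = complex_of_real (cnorm2 (cmat L *\<^sub>v y))"
    using cinner_adjoint[OF cmat_carrier_L y Ly] hermitian by (simp add: cinner_self)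
  then show ?thesis
    unfolding cnorm2_adjoint_mult_vec[OF cmat_carrier[OF B] y] gram_mult_vec[OF B BB y]
    using cinner_add_right[OF smult_carrier_vec[THEN iffD2, OF Ly] smult_carrier_vec[THEN iffD2, OF LLy] y]
      cinner_smult_right[OF y Ly] cinner_smult_right[OF y LLy]
    by simp
qed

text \<open>On the imaginary axis \<open>|(\<^bold>s I + L) y|\<^sup>2 = |\<^bold>s|\<^sup>2 |y|\<^sup>2 + |L y|\<^sup>2\<close>, and
  \<open>\<mu> <y, L y> \<le> |L y|\<^sup>2\<close> bounds the gain by that of \<open>\<^bold>s = 0\<close> on the least eigenvector.\<close>

lemma transfer_adjoint_bound:
  assumes B: "B \<in> carrier_mat m p" and BB: "B * transpose_mat B = a \<cdot>\<^sub>m L + b \<cdot>\<^sub>m (L * L)"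
    and "0 \<le> a" "0 \<le> b" and s: "Re s = 0" and u: "u \<in> carrier_vec m"
  shows "cnorm2 (conj_transpose (minv (shifted s) * cmat B) *\<^sub>v u) \<le> (a / \<mu> + b) * cnorm2 u"
proof -
  have s': "Re (cnj s) = 0" using s by simp
  define y where "y = minv (shifted (cnj s)) *\<^sub>v u"
  have y: "y \<in> carrier_vec m" unfolding y_def using minv_shifted(1)[OF s'] u by simp
  have Ly: "cmat L *\<^sub>v y \<in> carrier_vec m" using cmat_carrier_L y by simp
  have "conj_transpose (minv (shifted s) * cmat B) *\<^sub>v u = conj_transpose (cmat B) *\<^sub>v y"
    unfolding conj_transpose_mult[OF minv_shifted(1)[OF s] cmat_carrier[OF B]] conj_transpose_minv_shifted[OF s]
      y_def using minv_shifted(1)[OF s'] B u by (simp add: assoc_mult_mat_vec[of _ p m _ m])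
  also have "cnorm2 \<dots> = a * Re (cinner y (cmat L *\<^sub>v y)) + b * cnorm2 (cmat L *\<^sub>v y)"
    by (rule gram_form[OF B BB y])
  also have "\<dots> \<le> (a / \<mu> + b) * cnorm2 (cmat L *\<^sub>v y)"
  proof -
    have "a * (\<mu> * Re (cinner y (cmat L *\<^sub>v y))) \<le> a * cnorm2 (cmat L *\<^sub>v y)"
      by (rule mult_left_mono[OF rayleigh_image[OF y] \<open>0 \<le> a\<close>])
    then have "a * Re (cinner y (cmat L *\<^sub>v y)) \<le> a / \<mu> * cnorm2 (cmat L *\<^sub>v y)"
      using pos by (simp add: field_simps)
    then show ?thesis by (simp add: algebra_simps)
  qed
  also have "cnorm2 (cmat L *\<^sub>v y) \<le> cnorm2 u"
  proof -
    have "u = cnj s \<cdot>\<^sub>v y + cmat L *\<^sub>v y"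
      using shifted_minv_mult_vec[OF s' u] shifted_mult_vec[OF y] unfolding y_def by simp
    moreover have "Re (cinner (cnj s \<cdot>\<^sub>v y) (cmat L *\<^sub>v y)) = 0"
      unfolding cinner_smult_left using form_Im[OF y] s by simp
    ultimately have "cnorm2 u = cnorm2 (cnj s \<cdot>\<^sub>v y) + cnorm2 (cmat L *\<^sub>v y)"
      using cnorm2_add[OF smult_carrier_vec[THEN iffD2, OF y] Ly] by simp
    then show ?thesis using cnorm2_nonneg[of "cnj s \<cdot>\<^sub>v y"] by simp
  qed
  then have "(a / \<mu> + b) * cnorm2 (cmat L *\<^sub>v y) \<le> (a / \<mu> + b) * cnorm2 u"
    using pos \<open>0 \<le> a\<close> \<open>0 \<le> b\<close> by (intro mult_left_mono) auto
  finally show ?thesis .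
qed

lemma minv_shifted_zero_hermitian: "conj_transpose (minv (shifted 0)) = minv (shifted 0)"
  using conj_transpose_minv_shifted[of 0] by simp

lemma least_eigenvector_smult:
  "x \<in> carrier_vec m \<Longrightarrow> cmat L *\<^sub>v x = complex_of_real \<mu> \<cdot>\<^sub>v x \<Longrightarrow>
   cmat L *\<^sub>v (c \<cdot>\<^sub>v x) = (complex_of_real \<mu> * c) \<cdot>\<^sub>v x"
  using mult_mat_vec[OF cmat_carrier_L] by (simp add: smult_smult_assoc mult.commute)

lemma minv_shifted_zero_eigenvector:
  assumes x: "x \<in> carrier_vec m" and Lx: "cmat L *\<^sub>v x = complex_of_real \<mu> \<cdot>\<^sub>v x"
  shows "minv (shifted 0) *\<^sub>v x = complex_of_real (1 / \<mu>) \<cdot>\<^sub>v x"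
proof -
  define v where "v = complex_of_real (1 / \<mu>) \<cdot>\<^sub>v x"
  have v: "v \<in> carrier_vec m" unfolding v_def using x by simp
  have "shifted 0 *\<^sub>v v = x"
    unfolding v_def shifted_zero least_eigenvector_smult[OF x Lx] using x pos by simp
  then have "minv (shifted 0) *\<^sub>v x = (minv (shifted 0) * shifted 0) *\<^sub>v v"
    using assoc_mult_mat_vec[OF minv_shifted(1)[of 0] shifted_carrier[of 0] v] by simp
  also have "\<dots> = v"
    using minv_shifted(3)[of 0] v by simp
  finally show ?thesis unfolding v_def .
qed

lemma transfer_at_zero_attains:
  assumes B: "B \<in> carrier_mat m p" and BB: "B * transpose_mat B = a \<cdot>\<^sub>m L + b \<cdot>\<^sub>m (L * L)"
  obtains x where "x \<in> carrier_vec m" "x \<noteq> 0\<^sub>v m"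
    "(minv (shifted 0) * cmat B) *\<^sub>v (conj_transpose (minv (shifted 0) * cmat B) *\<^sub>v x)
       = complex_of_real (a / \<mu> + b) \<cdot>\<^sub>v x"
proof -
  obtain x where x: "x \<in> carrier_vec m" "x \<noteq> 0\<^sub>v m" and Lx: "cmat L *\<^sub>v x = complex_of_real \<mu> \<cdot>\<^sub>v x"
    by (rule eigenvector)
  define R where "R = minv (shifted 0)"
  have R: "R \<in> carrier_mat m m" unfolding R_def using minv_shifted(1)[of 0] by simp
  have Rx: "R *\<^sub>v x = complex_of_real (1 / \<mu>) \<cdot>\<^sub>v x"
    unfolding R_def by (rule minv_shifted_zero_eigenvector[OF x(1) Lx])
  have RH: "conj_transpose R = R"
    unfolding R_def by (rule minv_shifted_zero_hermitian)
  have BH: "conj_transpose (cmat B) \<in> carrier_mat p m" using B by simp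
  have Rx': "R *\<^sub>v x \<in> carrier_vec m" using R x(1) by simp
  have "(R * cmat B) *\<^sub>v (conj_transpose (R * cmat B) *\<^sub>v x) = R *\<^sub>v ((cmat B * conj_transpose (cmat B)) *\<^sub>v (R *\<^sub>v x))"
    unfolding conj_transpose_mult[OF R cmat_carrier[OF B]] RH
    using assoc_mult_mat_vec[OF BH R x(1)] assoc_mult_mat_vec[OF R cmat_carrier[OF B] mult_mat_vec_carrier[OF BH Rx']]
      assoc_mult_mat_vec[OF cmat_carrier[OF B] BH Rx'] by simp
  also have "(cmat B * conj_transpose (cmat B)) *\<^sub>v (R *\<^sub>v x) = complex_of_real (a + b * \<mu>) \<cdot>\<^sub>v x"
    unfolding Rx gram_mult_vec[OF B BB smult_carrier_vec[THEN iffD2, OF x(1)]] least_eigenvector_smult[OF x(1) Lx]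
    using pos by (simp add: smult_smult_assoc add_smult_distrib_vec[symmetric] field_simps)
  also have "R *\<^sub>v (complex_of_real (a + b * \<mu>) \<cdot>\<^sub>v x) = complex_of_real (a / \<mu> + b) \<cdot>\<^sub>v x"
    unfolding mult_mat_vec[OF R x(1)] Rx smult_smult_assoc using pos by (simp add: field_simps)
  finally show ?thesis
    using that x unfolding R_def by blast
qed

theorem sigma_max_transfer_le:
  assumes B: "B \<in> carrier_mat m p" and "0 < p" and BB: "B * transpose_mat B = a \<cdot>\<^sub>m L + b \<cdot>\<^sub>m (L * L)"
    and "0 \<le> a" "0 \<le> b" and s: "Re s = 0"
  shows "sigma_max (minv (shifted s) * cmat B) \<le> sqrt (a / \<mu> + b)"
  by (rule sigma_max_le[OF mult_carrier_mat[OF minv_shifted(1)[OF s] cmat_carrier[OF B]] \<open>0 < p\<close> _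
        transfer_adjoint_bound[OF B BB \<open>0 \<le> a\<close> \<open>0 \<le> b\<close> s]])
    (use pos \<open>0 \<le> a\<close> \<open>0 \<le> b\<close> in simp_all)

theorem sigma_max_transfer_zero:
  assumes B: "B \<in> carrier_mat m p" and "0 < p" and BB: "B * transpose_mat B = a \<cdot>\<^sub>m L + b \<cdot>\<^sub>m (L * L)"
    and "0 \<le> a" "0 \<le> b"
  shows "sigma_max (minv (shifted 0) * cmat B) = sqrt (a / \<mu> + b)"
proof -
  obtain x where "x \<in> carrier_vec m" "x \<noteq> 0\<^sub>v m"
    "(minv (shifted 0) * cmat B) *\<^sub>v (conj_transpose (minv (shifted 0) * cmat B) *\<^sub>v x)
       = complex_of_real (a / \<mu> + b) \<cdot>\<^sub>v x"
    using transfer_at_zero_attains[OF B BB] by blast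
  then show ?thesis
    by (intro sigma_max_eqI[OF mult_carrier_mat[OF minv_shifted(1)[of 0] cmat_carrier[OF B]] \<open>0 < p\<close> _
          transfer_adjoint_bound[OF B BB \<open>0 \<le> a\<close> \<open>0 \<le> b\<close>]])
      (use pos \<open>0 \<le> a\<close> \<open>0 \<le> b\<close> in simp_all)
qed

lemma cmat_minv: "cmat (minv L) = minv (shifted 0)"
proof -
  have inj: "v = 0\<^sub>v m" if v: "v \<in> carrier_vec m" and Lv: "L *\<^sub>v v = 0\<^sub>v m" for v
  proof -
    have "shifted 0 *\<^sub>v map_vec complex_of_real v = 0\<^sub>v m"
      unfolding shifted_zero using cmat_mult_vec[OF carrier v] Lv by simp
    then show ?thesis
      using shifted_injective[of 0 "map_vec complex_of_real v"] v by simp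
  qed
  note Li = minv_if_injective[OF carrier inj]
  show ?thesis
    unfolding shifted_zero
    using cmat_mult[OF carrier Li(1)] cmat_mult[OF Li(1) carrier] Li
    by (intro minv_eqI[OF cmat_carrier_L, symmetric]) simp_all
qed

theorem sigma_max_minv: "sigma_max (cmat (minv L)) = 1 / \<mu>"
proof -
  define T where "T = minv (shifted 0)"
  have T: "T \<in> carrier_mat m m" and TH: "conj_transpose T = T"
    unfolding T_def using minv_shifted(1)[of 0] minv_shifted_zero_hermitian by simp_all
  have "cnorm2 (conj_transpose T *\<^sub>v u) \<le> (1 / \<mu>)\<^sup>2 * cnorm2 u" if u: "u \<in> carrier_vec m" for u
    using norm_image[of "T *\<^sub>v u"] shifted_minv_mult_vec[of 0 u] T u pos
    unfolding TH unfolding T_def shifted_zero by (simp add: field_simps)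
  moreover obtain x where x: "x \<in> carrier_vec m" "x \<noteq> 0\<^sub>v m"
    and Lx: "cmat L *\<^sub>v x = complex_of_real \<mu> \<cdot>\<^sub>v x"
    by (rule eigenvector)
  moreover have Tx: "T *\<^sub>v x = complex_of_real (1 / \<mu>) \<cdot>\<^sub>v x"
    unfolding T_def by (rule minv_shifted_zero_eigenvector[OF x(1) Lx])
  moreover have "T *\<^sub>v (conj_transpose T *\<^sub>v x) = complex_of_real ((1 / \<mu>)\<^sup>2) \<cdot>\<^sub>v x"
    unfolding TH Tx mult_mat_vec[OF T x(1)] smult_smult_assoc by (simp add: power2_eq_square)
  ultimately have "sigma_max T = sqrt ((1 / \<mu>)\<^sup>2)"
    by (intro sigma_max_eqI[OF T dim_pos]) simp_all
  then show ?thesis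
    unfolding cmat_minv T_def[symmetric] using pos by simp
qed

end

lemma least_rayleigh_smult:
  assumes L: "L \<in> carrier_mat m m" and "0 \<le> c" and "least_rayleigh L \<mu>"
  shows "least_rayleigh (c \<cdot>\<^sub>m L) (c * \<mu>)"
proof -
  have cL: "cmat (c \<cdot>\<^sub>m L) *\<^sub>v w = complex_of_real c \<cdot>\<^sub>v (cmat L *\<^sub>v w)" if "w \<in> carrier_vec m" for w
    unfolding cmat_smult using smult_mat_mult_vec[OF cmat_carrier[OF L] that] .
  have "c * \<mu> * cnorm2 w \<le> Re (cinner w (cmat (c \<cdot>\<^sub>m L) *\<^sub>v w))" if w: "w \<in> carrier_vec m" for w
    using mult_left_mono[OF _ \<open>0 \<le> c\<close>, of "\<mu> * cnorm2 w"] assms(3) L w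
      cinner_smult_right[OF w mult_mat_vec_carrier[OF cmat_carrier[OF L] w], of "complex_of_real c"]
    unfolding least_rayleigh_def cL[OF w] by (simp add: mult.assoc)
  moreover have "\<exists>x \<in> carrier_vec m. x \<noteq> 0\<^sub>v m \<and> cmat (c \<cdot>\<^sub>m L) *\<^sub>v x = complex_of_real (c * \<mu>) \<cdot>\<^sub>v x"
    using assms(3) L unfolding least_rayleigh_def by (auto simp: cL smult_smult_assoc)
  ultimately show ?thesis
    unfolding least_rayleigh_def using L by simp
qed

section \<open>Incidence matrices of trees\<close>

lemma incidence_carrier [simp]: "incidence n es \<in> carrier_mat n (length es)"
  unfolding incidence_def by simp

lemma incidence_dim [simp]: "dim_row (incidence n es) = n" "dim_col (incidence n es) = length es"
  unfolding incidence_def by simp_all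

lemma incidence_index:
  "k < n \<Longrightarrow> l < length es \<Longrightarrow>
   incidence n es $$ (k,l) = (if k = fst (es ! l) then 1 else if k = snd (es ! l) then -1 else 0)"
  unfolding incidence_def by simp

lemma nth_mem_remove_nth:
  assumes "l < length es" "l \<noteq> l0"
  shows "es ! l \<in> set (take l0 es @ drop (Suc l0) es)"
proof (cases "l < l0")
  case True
  then have "take l0 es ! l = es ! l" "l < length (take l0 es)"
    using assms by auto
  then have "es ! l \<in> set (take l0 es)"
    using nth_mem[of l "take l0 es"] by simp
  then show ?thesis by simp
next
  case False
  then have "drop (Suc l0) es ! (l - Suc l0) = es ! l" "l - Suc l0 < length (drop (Suc l0) es)"
    using assms by auto
  then have "es ! l \<in> set (drop (Suc l0) es)"
    using nth_mem[of "l - Suc l0" "drop (Suc l0) es"] by simp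
  then show ?thesis by simp
qed

text \<open>Removing edge \<open>l\<^sub>0\<close> of a tree leaves its initial node and its terminal node in different
  components; summing the rows of the incidence matrix over the component of the initial node
  isolates column \<open>l\<^sub>0\<close>, because every other edge has both or neither endpoint in it.\<close>

lemma tree_cut_rows:
  assumes tree: "is_tree n es" and l0: "l0 < length es"
  obtains S where "S \<subseteq> {..<n}"
    "\<And>l. l < length es \<Longrightarrow> (\<Sum>k\<in>S. incidence n es $$ (k,l)) = (if l = l0 then 1 else 0)"
proof
  define es' where "es' = take l0 es @ drop (Suc l0) es"
  define S where "S = {k. k < n \<and> (fst (es ! l0), k) \<in> (ug_adj es')\<^sup>*}"
  show "S \<subseteq> {..<n}" unfolding S_def by auto
  have ends: "fst (es ! l) < n" "snd (es ! l) < n" "fst (es ! l) \<noteq> snd (es ! l)" if "l < length es" for l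
    using tree that unfolding is_tree_def by blast+
  fix l assume l: "l < length es"
  have "(\<Sum>k\<in>S. incidence n es $$ (k,l))
      = (\<Sum>k\<in>S. (if k = fst (es ! l) then 1 else 0) - (if k = snd (es ! l) then 1 else 0))"
    using l ends[OF l] by (intro sum.cong) (auto simp: incidence_index S_def)
  also have "\<dots> = (if fst (es ! l) \<in> S then 1 else 0) - (if snd (es ! l) \<in> S then 1 else 0)"
    by (simp add: sum_subtractf S_def)
  also have "\<dots> = (if l = l0 then 1 else 0)"
  proof (cases "l = l0")
    case True
    have "(fst (es ! l0), snd (es ! l0)) \<notin> (ug_adj es')\<^sup>*"
      using tree l0 unfolding is_tree_def es'_def by blast
    then show ?thesis using True ends[OF l0] by (simp add: S_def)
  next
    case False
    obtain i where "i < length es'" "es' ! i = (fst (es ! l), snd (es ! l))"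
      using nth_mem_remove_nth[OF l False] unfolding es'_def[symmetric] in_set_conv_nth by auto
    then have "(fst (es ! l), snd (es ! l)) \<in> ug_adj es'" "(snd (es ! l), fst (es ! l)) \<in> ug_adj es'"
      unfolding ug_adj_def by blast+
    then have "fst (es ! l) \<in> S \<longleftrightarrow> snd (es ! l) \<in> S"
      unfolding S_def using ends[OF l] by (auto intro: rtrancl_into_rtrancl)
    then show ?thesis using False by simp
  qed
  finally show "(\<Sum>k\<in>S. incidence n es $$ (k,l)) = (if l = l0 then 1 else 0)" .
qed

lemma tree_incidence_injective:
  assumes tree: "is_tree n es" and y: "y \<in> carrier_vec (length es)"
    and Dy: "cmat (incidence n es) *\<^sub>v y = 0\<^sub>v n"
  shows "y = 0\<^sub>v (length es)"
proof (rule eq_vecI)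
  fix l0 assume "l0 < dim_vec (0\<^sub>v (length es) :: complex vec)"
  then have l0: "l0 < length es" by simp
  obtain S where S: "S \<subseteq> {..<n}"
    and col: "\<And>l. l < length es \<Longrightarrow> (\<Sum>k\<in>S. incidence n es $$ (k,l)) = (if l = l0 then 1 else 0)"
    using tree_cut_rows[OF tree l0] by blast
  have row: "(\<Sum>l<length es. complex_of_real (incidence n es $$ (k,l)) * y $ l) = 0" if "k \<in> S" for k
  proof -
    have "k < n" using that S by auto
    then have "(\<Sum>l<length es. cmat (incidence n es) $$ (k,l) * y $ l) = 0"
      using arg_cong[OF Dy, of "\<lambda>v. v $ k"] mult_mat_vec_index[OF cmat_carrier[OF incidence_carrier] y \<open>k < n\<close>]
      by simp
    moreover have "(\<Sum>l<length es. cmat (incidence n es) $$ (k,l) * y $ l)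
        = (\<Sum>l<length es. complex_of_real (incidence n es $$ (k,l)) * y $ l)"
      using \<open>k < n\<close> by (intro sum.cong) auto
    ultimately show ?thesis by simp
  qed
  have "0 = (\<Sum>k\<in>S. \<Sum>l<length es. complex_of_real (incidence n es $$ (k,l)) * y $ l)"
    using row by simp
  also have "\<dots> = (\<Sum>l<length es. complex_of_real (\<Sum>k\<in>S. incidence n es $$ (k,l)) * y $ l)"
    by (subst sum.swap) (simp add: sum_distrib_right)
  also have "\<dots> = (\<Sum>l<length es. if l = l0 then y $ l else 0)"
    by (rule sum.cong) (auto simp: col simp del: of_real_sum)
  also have "\<dots> = y $ l0"
    using l0 by simp
  finally show "y $ l0 = 0\<^sub>v (length es) $ l0" using l0 by simp
qed (use y in simp)

lemma diag_of_carrier [simp]: "diag_of n d \<in> carrier_mat n n"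
  unfolding diag_of_def by simp

lemma diag_of_dim [simp]: "dim_row (diag_of n d) = n" "dim_col (diag_of n d) = n"
  unfolding diag_of_def by simp_all

lemma diag_of_index: "i < n \<Longrightarrow> j < n \<Longrightarrow> diag_of n d $$ (i,j) = (if i = j then d i else 0)"
  unfolding diag_of_def by simp

lemma transpose_diag_of [simp]: "transpose_mat (diag_of n d) = diag_of n d"
  unfolding diag_of_def by (rule eq_matI) auto

lemma mult_diag_of_index:
  assumes A: "A \<in> carrier_mat r k" and i: "i < r" and j: "j < k"
  shows "(A * diag_of k d) $$ (i,j) = A $$ (i,j) * d j"
proof -
  have "(A * diag_of k d) $$ (i,j) = (\<Sum>l<k. A $$ (i,l) * diag_of k d $$ (l,j))"
    by (rule mult_mat_index[OF A diag_of_carrier i j])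
  also have "\<dots> = (\<Sum>l<k. if l = j then A $$ (i,j) * d j else 0)"
    by (rule sum.cong) (use j in \<open>auto simp: diag_of_index\<close>)
  finally show ?thesis using j by simp
qed

lemma diag_of_mult: "diag_of n a * diag_of n b = diag_of n (\<lambda>i. a i * b i)"
  by (rule eq_matI) (simp_all add: mult_diag_of_index[OF diag_of_carrier] diag_of_index del: index_mult_mat(1))

lemma minv_diag_of:
  assumes "\<And>i. i < n \<Longrightarrow> d i \<noteq> 0"
  shows "minv (diag_of n d) = diag_of n (\<lambda>i. 1 / d i)"
proof (rule minv_eqI[OF diag_of_carrier diag_of_carrier])
  show "diag_of n d * diag_of n (\<lambda>i. 1 / d i) = 1\<^sub>m n" "diag_of n (\<lambda>i. 1 / d i) * diag_of n d = 1\<^sub>m n"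
    unfolding diag_of_mult using assms by (auto simp: diag_of_index)
qed

lemma diag_pow_diag_of: "diag_pow (diag_of n d) p = diag_of n (\<lambda>i. d i powr p)"
  unfolding diag_pow_def diag_of_def by (rule eq_matI) auto

lemma smult_one_eq_diag_of: "c \<cdot>\<^sub>m 1\<^sub>m n = diag_of n (\<lambda>_. c)"
  unfolding diag_of_def by (rule eq_matI) auto

lemma diag_of_mult_vec:
  assumes z: "z \<in> carrier_vec n" and k: "k < n"
  shows "(cmat (diag_of n d) *\<^sub>v z) $ k = complex_of_real (d k) * z $ k"
proof -
  have "(cmat (diag_of n d) *\<^sub>v z) $ k = (\<Sum>l<n. cmat (diag_of n d) $$ (k,l) * z $ l)"
    by (rule mult_mat_vec_index[OF _ z k]) simp
  also have "\<dots> = (\<Sum>l<n. if l = k then complex_of_real (d k) * z $ k else 0)"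
    by (rule sum.cong) (use k in \<open>auto simp: diag_of_index\<close>)
  finally show ?thesis using k by simp
qed

lemma eigenvalue_smult_one_iff:
  fixes c :: real
  assumes "0 < n"
  shows "eigenvalue (c \<cdot>\<^sub>m 1\<^sub>m n) k \<longleftrightarrow> k = c"
proof
  assume "eigenvalue (c \<cdot>\<^sub>m 1\<^sub>m n) k"
  then obtain v where v: "v \<in> carrier_vec n" "v \<noteq> 0\<^sub>v n" "c \<cdot>\<^sub>v v = k \<cdot>\<^sub>v v"
    unfolding eigenvalue_def eigenvector_def by (auto simp: smult_mat_mult_vec[OF one_carrier_mat])
  obtain i where "i < n" "v $ i \<noteq> 0"
  proof (rule ccontr)
    assume "\<not> thesis"
    then have "v = 0\<^sub>v n"
      using that v(1) by (intro eq_vecI) auto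
    with v(2) show False by contradiction
  qed
  then show "k = c"
    using arg_cong[OF v(3), of "\<lambda>v. v $ i"] v(1) by auto
next
  assume "k = c"
  moreover have "unit_vec n 0 \<noteq> 0\<^sub>v n"
    using assms by (auto dest!: arg_cong[of _ _ "\<lambda>v. v $ 0"])
  ultimately show "eigenvalue (c \<cdot>\<^sub>m 1\<^sub>m n) k"
    unfolding eigenvalue_def eigenvector_def
    by (intro exI[of _ "unit_vec n 0"]) (auto simp: smult_mat_mult_vec[OF one_carrier_mat])
qed

lemma sum_lessThan_add: "(\<Sum>k < a + b. f k) = (\<Sum>k < a. f k) + (\<Sum>l < b. f (a + l))" for a b :: nat
  by (induct b) (auto simp: add.assoc)

lemma hcat_mult_transpose:
  assumes A: "A \<in> carrier_mat r k1" and C: "C \<in> carrier_mat r k2"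
  shows "hcat A C * transpose_mat (hcat A C) = A * transpose_mat A + C * transpose_mat C"
proof (rule eq_matI)
  fix i j assume "i < dim_row (A * transpose_mat A + C * transpose_mat C)"
    "j < dim_col (A * transpose_mat A + C * transpose_mat C)"
  then have ij: "i < r" "j < r" using C by auto
  have "(hcat A C * transpose_mat (hcat A C)) $$ (i,j)
      = (\<Sum>l < k1 + k2. hcat A C $$ (i,l) * hcat A C $$ (j,l))"
    using A C ij by (simp add: hcat_def scalar_prod_def lessThan_atLeast0)
  also have "\<dots> = (\<Sum>l < k1. A $$ (i,l) * A $$ (j,l)) + (\<Sum>l < k2. C $$ (i,l) * C $$ (j,l))"
    unfolding sum_lessThan_add using A C ij by (simp add: hcat_def)
  finally show "(hcat A C * transpose_mat (hcat A C)) $$ (i,j) = (A * transpose_mat A + C * transpose_mat C) $$ (i,j)"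
    using A C ij by (simp add: scalar_prod_def lessThan_atLeast0)
qed (use A C in \<open>auto simp: hcat_def\<close>)

lemma hcat_carrier: "A \<in> carrier_mat r k1 \<Longrightarrow> C \<in> carrier_mat r k2 \<Longrightarrow> hcat A C \<in> carrier_mat r (k1 + k2)"
  unfolding hcat_def by simp

lemma transpose_smult_mat: "transpose_mat (c \<cdot>\<^sub>m A) = c \<cdot>\<^sub>m transpose_mat A"
  by (rule eq_matI) auto

lemma smult_smult_mat: "a \<cdot>\<^sub>m (b \<cdot>\<^sub>m A) = (a * b) \<cdot>\<^sub>m (A :: 'a :: semigroup_mult mat)"
  by (rule eq_matI) (auto simp: mult.assoc)

lemma smult_mult_transpose:
  fixes A :: "'a :: comm_semiring_0 mat"
  assumes "A \<in> carrier_mat r k"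
  shows "(c \<cdot>\<^sub>m A) * transpose_mat (c \<cdot>\<^sub>m A) = (c * c) \<cdot>\<^sub>m (A * transpose_mat A)"
  using assms by (simp add: transpose_smult_mat mult_smult_assoc_mat[of _ r k] mult_smult_distrib[of _ r k]
      smult_smult_mat)

section \<open>The weighted Laplacian of a tree\<close>

locale weighted_tree =
  fixes m :: nat and es :: "(nat \<times> nat) list" and \<epsilon> :: "nat \<Rightarrow> real"
  assumes edges_pos: "0 < m" and tree: "is_tree (Suc m) es" and length_edges: "length es = m"
    and time_scales_pos: "\<forall>i<Suc m. 0 < \<epsilon> i"
begin

definition laplacian :: "real mat" where
  "laplacian = transpose_mat (incidence (Suc m) es) * minv (diag_of (Suc m) \<epsilon>) * incidence (Suc m) es"

lemma incidence_carrier': "incidence (Suc m) es \<in> carrier_mat (Suc m) m"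
  using incidence_carrier[of "Suc m" es] length_edges by simp

lemma minv_time_scales: "minv (diag_of (Suc m) \<epsilon>) = diag_of (Suc m) (\<lambda>i. 1 / \<epsilon> i)"
  using time_scales_pos by (intro minv_diag_of) auto

lemma transpose_incidence_carrier: "transpose_mat (incidence (Suc m) es) \<in> carrier_mat m (Suc m)"
  using incidence_carrier' by simp

lemma laplacian_carrier: "laplacian \<in> carrier_mat m m"
  unfolding laplacian_def minv_time_scales
  by (rule mult_carrier_mat[OF mult_carrier_mat[OF transpose_incidence_carrier diag_of_carrier] incidence_carrier'])

lemma laplacian_symmetric: "transpose_mat laplacian = laplacian"
proof -
  note D = incidence_carrier' and DT = transpose_incidence_carrier and E = diag_of_carrier[of "Suc m"]
  have "transpose_mat laplacian
      = transpose_mat (incidence (Suc m) es) * (transpose_mat (minv (diag_of (Suc m) \<epsilon>)) * incidence (Suc m) es)"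
    unfolding laplacian_def minv_time_scales transpose_mult[OF mult_carrier_mat[OF DT E] D] transpose_mult[OF DT E]
    by simp
  also have "\<dots> = laplacian"
    unfolding laplacian_def minv_time_scales transpose_diag_of using assoc_mult_mat[OF DT E D] by simp
  finally show ?thesis .
qed

lemma laplacian_form:
  assumes y: "y \<in> carrier_vec m"
  shows "Re (cinner y (cmat laplacian *\<^sub>v y)) = (\<Sum>k<Suc m. (cmod ((cmat (incidence (Suc m) es) *\<^sub>v y) $ k))\<^sup>2 / \<epsilon> k)"
proof -
  define D where "D = cmat (incidence (Suc m) es)"
  define z where "z = D *\<^sub>v y"
  have D: "D \<in> carrier_mat (Suc m) m" unfolding D_def using incidence_carrier' by simp
  have z: "z \<in> carrier_vec (Suc m)" unfolding z_def using D y by simp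
  have "cmat laplacian *\<^sub>v y = conj_transpose D *\<^sub>v (cmat (diag_of (Suc m) (\<lambda>i. 1 / \<epsilon> i)) *\<^sub>v z)"
  proof -
    note DT = transpose_incidence_carrier and E = diag_of_carrier[of "Suc m" "\<lambda>i. 1 / \<epsilon> i"]
    have "cmat laplacian = cmat (transpose_mat (incidence (Suc m) es)) * cmat (diag_of (Suc m) (\<lambda>i. 1 / \<epsilon> i)) * D"
      unfolding laplacian_def minv_time_scales D_def
      using cmat_mult[OF mult_carrier_mat[OF DT E] incidence_carrier'] cmat_mult[OF DT E] by simp
    then show ?thesis
      using assoc_mult_mat_vec[OF mult_carrier_mat[OF cmat_carrier[OF DT] cmat_carrier[OF E]] D y]
        assoc_mult_mat_vec[OF cmat_carrier[OF DT] cmat_carrier[OF E] mult_mat_vec_carrier[OF D y]]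
      unfolding z_def D_def by (simp add: conj_transpose_cmat)
  qed
  then have "cinner y (cmat laplacian *\<^sub>v y) = cinner z (cmat (diag_of (Suc m) (\<lambda>i. 1 / \<epsilon> i)) *\<^sub>v z)"
    using cinner_adjoint[OF conj_transpose_carrier[OF D] y mult_mat_vec_carrier[OF cmat_carrier[OF diag_of_carrier] z]]
    unfolding z_def by simp
  also have "\<dots> = (\<Sum>k<Suc m. complex_of_real (1 / \<epsilon> k) * (cnj (z $ k) * z $ k))"
    unfolding cinner_def using z by (auto simp: diag_of_mult_vec mult_ac simp del: index_mult_mat_vec intro!: sum.cong)
  finally show ?thesis
    unfolding z_def D_def by (simp add: complex_norm_square[symmetric] mult.commute)
qed

lemma laplacian_form_pos:
  assumes y: "y \<in> carrier_vec m" and "y \<noteq> 0\<^sub>v m"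
  shows "0 < Re (cinner y (cmat laplacian *\<^sub>v y))"
proof -
  define z where "z = cmat (incidence (Suc m) es) *\<^sub>v y"
  have z: "z \<in> carrier_vec (Suc m)" unfolding z_def using mult_mat_vec_carrier[OF cmat_carrier[OF incidence_carrier'] y] .
  have "z \<noteq> 0\<^sub>v (Suc m)"
    using tree_incidence_injective[OF tree] y \<open>y \<noteq> 0\<^sub>v m\<close> length_edges unfolding z_def by auto
  obtain k where "k < Suc m" "z $ k \<noteq> 0"
  proof (rule ccontr)
    assume "\<not> thesis"
    then have "z = 0\<^sub>v (Suc m)"
      using that z by (intro eq_vecI) auto
    with \<open>z \<noteq> 0\<^sub>v (Suc m)\<close> show False by contradiction
  qed
  then have "0 < (\<Sum>k<Suc m. (cmod (z $ k))\<^sup>2 / \<epsilon> k)"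
    using time_scales_pos by (intro sum_pos2[of _ k]) auto
  then show ?thesis
    unfolding laplacian_form[OF y] z_def .
qed

lemma laplacian_sym_pos_def: "sym_pos_def m laplacian (lam_min laplacian)"
proof -
  note spectral = lam_min_least_rayleigh[OF laplacian_carrier edges_pos laplacian_symmetric]
  obtain x where x: "x \<in> carrier_vec m" "x \<noteq> 0\<^sub>v m"
    and Lx: "cmat laplacian *\<^sub>v x = complex_of_real (lam_min laplacian) \<cdot>\<^sub>v x"
    using spectral(2) laplacian_carrier unfolding least_rayleigh_def by auto
  have "0 < lam_min laplacian * cnorm2 x"
    using laplacian_form_pos[OF x] unfolding Lx cinner_smult_right[OF x(1) x(1)] cinner_self by simp
  then have "0 < lam_min laplacian"
    using cnorm2_pos[OF x] by (simp add: zero_less_mult_iff)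
  then show ?thesis
    using spectral(2) by unfold_locales (simp_all add: laplacian_carrier laplacian_symmetric)
qed

lemma lam_min_le_lam_max: "lam_min laplacian \<le> lam_max laplacian"
  unfolding lam_max_def
  using lam_min_least_rayleigh(1)[OF laplacian_carrier edges_pos laplacian_symmetric] finite_eigenvalues[OF laplacian_carrier]
  by (intro Max_ge) auto

end

section \<open>The transfer matrices of the noisy consensus network\<close>

locale tree_consensus = weighted_tree +
  fixes \<rho> \<sigma>w \<sigma>v :: real
  assumes weight_pos: "0 < \<rho>"
begin

definition input_mat :: "real mat" where
  "input_mat = hcat (\<sigma>w \<cdot>\<^sub>m (transpose_mat (incidence (Suc m) es) * diag_pow (diag_of (Suc m) \<epsilon>) (-1/2)))
                    ((- \<sigma>v) \<cdot>\<^sub>m (laplacian * diag_pow (\<rho> \<cdot>\<^sub>m 1\<^sub>m m) (1/2)))"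

definition gain :: real where
  "gain = \<sigma>w\<^sup>2 / (\<rho>\<^sup>2 * lam_min laplacian) + \<sigma>v\<^sup>2 / \<rho>"

lemma sqrt_weights: "diag_pow (\<rho> \<cdot>\<^sub>m 1\<^sub>m m) (1/2) = sqrt \<rho> \<cdot>\<^sub>m 1\<^sub>m m"
  unfolding smult_one_eq_diag_of diag_pow_diag_of using weight_pos by (simp add: powr_half_sqrt)

lemma input_mat_carrier: "input_mat \<in> carrier_mat m (Suc m + m)"
  unfolding input_mat_def sqrt_weights diag_pow_diag_of
  using transpose_incidence_carrier laplacian_carrier by (intro hcat_carrier) auto

lemma input_gram:
  "input_mat * transpose_mat input_mat = \<sigma>w\<^sup>2 \<cdot>\<^sub>m laplacian + (\<sigma>v\<^sup>2 * \<rho>) \<cdot>\<^sub>m (laplacian * laplacian)"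
proof -
  define Dh where "Dh = transpose_mat (incidence (Suc m) es) * diag_of (Suc m) (\<lambda>i. \<epsilon> i powr (-1/2))"
  have Dh: "Dh \<in> carrier_mat m (Suc m)" unfolding Dh_def using incidence_carrier' by simp
  have "Dh * transpose_mat Dh = laplacian"
  proof -
    define Eh where "Eh = diag_of (Suc m) (\<lambda>i. \<epsilon> i powr (-1/2))"
    note D = incidence_carrier' and DT = transpose_incidence_carrier
    have Eh: "Eh \<in> carrier_mat (Suc m) (Suc m)" unfolding Eh_def by simp
    have "Eh * Eh = minv (diag_of (Suc m) \<epsilon>)"
      unfolding Eh_def diag_of_mult minv_time_scales using time_scales_pos
      by (intro eq_matI) (auto simp: diag_of_index powr_add[symmetric] powr_minus_divide)
    moreover have "Dh * transpose_mat Dh = transpose_mat (incidence (Suc m) es) * (Eh * Eh) * incidence (Suc m) es"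
    proof -
      have "Dh = transpose_mat (incidence (Suc m) es) * Eh" and "transpose_mat Eh = Eh"
        unfolding Dh_def Eh_def by simp_all
      then show ?thesis
        using transpose_mult[OF DT Eh] assoc_mult_mat[OF mult_carrier_mat[OF DT Eh] Eh D] assoc_mult_mat[OF DT Eh Eh]
        by simp
    qed
    ultimately show ?thesis
      unfolding laplacian_def by simp
  qed
  then have A: "(\<sigma>w \<cdot>\<^sub>m Dh) * transpose_mat (\<sigma>w \<cdot>\<^sub>m Dh) = \<sigma>w\<^sup>2 \<cdot>\<^sub>m laplacian"
    using smult_mult_transpose[OF Dh] by (simp add: power2_eq_square)
  have "(sqrt \<rho> \<cdot>\<^sub>m laplacian) * transpose_mat (sqrt \<rho> \<cdot>\<^sub>m laplacian) = \<rho> \<cdot>\<^sub>m (laplacian * laplacian)"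
    using smult_mult_transpose[OF laplacian_carrier] weight_pos by (simp add: laplacian_symmetric)
  then have C: "((- \<sigma>v) \<cdot>\<^sub>m (sqrt \<rho> \<cdot>\<^sub>m laplacian)) * transpose_mat ((- \<sigma>v) \<cdot>\<^sub>m (sqrt \<rho> \<cdot>\<^sub>m laplacian))
      = (\<sigma>v\<^sup>2 * \<rho>) \<cdot>\<^sub>m (laplacian * laplacian)"
    unfolding smult_mult_transpose[OF smult_carrier_mat[OF laplacian_carrier]]
    by (simp add: smult_smult_mat power2_eq_square)
  have "input_mat = hcat (\<sigma>w \<cdot>\<^sub>m Dh) ((- \<sigma>v) \<cdot>\<^sub>m (sqrt \<rho> \<cdot>\<^sub>m laplacian))"
    unfolding input_mat_def sqrt_weights diag_pow_diag_of Dh_def[symmetric]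
    using mult_smult_distrib[OF laplacian_carrier one_carrier_mat] laplacian_carrier by simp
  then have "input_mat * transpose_mat input_mat
      = (\<sigma>w \<cdot>\<^sub>m Dh) * transpose_mat (\<sigma>w \<cdot>\<^sub>m Dh)
        + ((- \<sigma>v) \<cdot>\<^sub>m (sqrt \<rho> \<cdot>\<^sub>m laplacian)) * transpose_mat ((- \<sigma>v) \<cdot>\<^sub>m (sqrt \<rho> \<cdot>\<^sub>m laplacian))"
    using hcat_mult_transpose[OF smult_carrier_mat[OF Dh] smult_carrier_mat[OF smult_carrier_mat[OF laplacian_carrier]]]
    by simp
  then show ?thesis
    unfolding A C .
qed

lemma weighted_laplacian: "laplacian * (\<rho> \<cdot>\<^sub>m 1\<^sub>m m) = \<rho> \<cdot>\<^sub>m laplacian"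
  using mult_smult_distrib[OF laplacian_carrier one_carrier_mat] laplacian_carrier by simp

lemma weighted_laplacian_sym_pos_def: "sym_pos_def m (\<rho> \<cdot>\<^sub>m laplacian) (\<rho> * lam_min laplacian)"
proof -
  interpret sym_pos_def m laplacian "lam_min laplacian"
    by (rule laplacian_sym_pos_def)
  show ?thesis
    using carrier symmetric least_rayleigh_smult[OF carrier _ least] pos weight_pos
    by unfold_locales (simp_all add: transpose_smult_mat)
qed

lemma weighted_laplacian_square: "(\<rho> \<cdot>\<^sub>m laplacian) * (\<rho> \<cdot>\<^sub>m laplacian) = (\<rho> * \<rho>) \<cdot>\<^sub>m (laplacian * laplacian)"
  using mult_smult_assoc_mat[OF laplacian_carrier smult_carrier_mat[OF laplacian_carrier]]
    mult_smult_distrib[OF laplacian_carrier laplacian_carrier]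
  by (simp add: smult_smult_mat)

lemma input_gram_weighted:
  "input_mat * transpose_mat input_mat
     = (\<sigma>w\<^sup>2 / \<rho>) \<cdot>\<^sub>m (\<rho> \<cdot>\<^sub>m laplacian) + (\<sigma>v\<^sup>2 / \<rho>) \<cdot>\<^sub>m ((\<rho> \<cdot>\<^sub>m laplacian) * (\<rho> \<cdot>\<^sub>m laplacian))"
  unfolding input_gram weighted_laplacian_square smult_smult_mat
  using weight_pos by (simp add: power2_eq_square mult.assoc)

lemma scaled_input_gram:
  "(sqrt \<rho> \<cdot>\<^sub>m input_mat) * transpose_mat (sqrt \<rho> \<cdot>\<^sub>m input_mat)
     = \<sigma>w\<^sup>2 \<cdot>\<^sub>m (\<rho> \<cdot>\<^sub>m laplacian) + \<sigma>v\<^sup>2 \<cdot>\<^sub>m ((\<rho> \<cdot>\<^sub>m laplacian) * (\<rho> \<cdot>\<^sub>m laplacian))"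
  unfolding smult_mult_transpose[OF input_mat_carrier] input_gram weighted_laplacian_square
    add_smult_distrib_left_mat[OF smult_carrier_mat[OF laplacian_carrier]
      smult_carrier_mat[OF mult_carrier_mat[OF laplacian_carrier laplacian_carrier]]] smult_smult_mat
  using weight_pos by (simp add: power2_eq_square mult_ac)

lemma eigenvalues_sqrt_weights:
  "lam_max (diag_pow (\<rho> \<cdot>\<^sub>m 1\<^sub>m m) (1/2)) = sqrt \<rho>" "lam_min (diag_pow (\<rho> \<cdot>\<^sub>m 1\<^sub>m m) (1/2)) = sqrt \<rho>"
  unfolding sqrt_weights lam_max_def lam_min_def eigenvalue_smult_one_iff[OF edges_pos] by simp_all

lemma gain_nonneg: "0 \<le> gain"
  unfolding gain_def using sym_pos_def.pos[OF laplacian_sym_pos_def] weight_pos by simp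

lemma gain_eq_sigma_max_minv:
  "(1 / \<rho>\<^sup>2) * \<sigma>w\<^sup>2 * sigma_max (cmat (minv laplacian)) + (1 / \<rho>) * \<sigma>v\<^sup>2 = gain"
  unfolding sym_pos_def.sigma_max_minv[OF laplacian_sym_pos_def] gain_def by simp

lemma lam_max_pos: "0 < lam_max laplacian"
  using sym_pos_def.pos[OF laplacian_sym_pos_def] lam_min_le_lam_max by linarith

lemma gain_at_lam_max_le: "\<sigma>w\<^sup>2 / (\<rho>\<^sup>2 * lam_max laplacian) + \<sigma>v\<^sup>2 / \<rho> \<le> gain"
  unfolding gain_def using sym_pos_def.pos[OF laplacian_sym_pos_def] lam_min_le_lam_max weight_pos
  by (simp add: divide_left_mono mult_left_mono)

theorem hinf_norm_transfer:
  "hinf_norm (\<lambda>s. minv (s \<cdot>\<^sub>m 1\<^sub>m m + cmat (laplacian * (\<rho> \<cdot>\<^sub>m 1\<^sub>m m))) * cmat input_mat) = sqrt gain"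
proof -
  interpret W: sym_pos_def m "\<rho> \<cdot>\<^sub>m laplacian" "\<rho> * lam_min laplacian"
    by (rule weighted_laplacian_sym_pos_def)
  have "gain = (\<sigma>w\<^sup>2 / \<rho>) / (\<rho> * lam_min laplacian) + \<sigma>v\<^sup>2 / \<rho>"
    unfolding gain_def by (simp add: power2_eq_square)
  then show ?thesis
    unfolding weighted_laplacian
    using W.sigma_max_transfer_le[OF input_mat_carrier _ input_gram_weighted]
      W.sigma_max_transfer_zero[OF input_mat_carrier _ input_gram_weighted] weight_pos
    by (intro hinf_norm_eqI) simp_all
qed

theorem hinf_norm_scaled_transfer:
  "hinf_norm (\<lambda>s. cmat (diag_pow (\<rho> \<cdot>\<^sub>m 1\<^sub>m m) (1/2))
      * (minv (s \<cdot>\<^sub>m 1\<^sub>m m + cmat (laplacian * (\<rho> \<cdot>\<^sub>m 1\<^sub>m m))) * cmat input_mat)) = sqrt (\<rho> * gain)"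
proof -
  interpret W: sym_pos_def m "\<rho> \<cdot>\<^sub>m laplacian" "\<rho> * lam_min laplacian"
    by (rule weighted_laplacian_sym_pos_def)
  have scaled: "cmat (sqrt \<rho> \<cdot>\<^sub>m 1\<^sub>m m) * (minv (W.shifted s) * cmat input_mat)
      = minv (W.shifted s) * cmat (sqrt \<rho> \<cdot>\<^sub>m input_mat)" if "Re s = 0" for s
  proof -
    note R = W.minv_shifted(1)[OF that] and B = cmat_carrier[OF input_mat_carrier]
    show ?thesis
      using mult_smult_assoc_mat[OF one_carrier_mat mult_carrier_mat[OF R B]] mult_smult_distrib[OF R B] R B
      by (simp add: cmat_smult)
  qed
  have "\<rho> * gain = \<sigma>w\<^sup>2 / (\<rho> * lam_min laplacian) + \<sigma>v\<^sup>2"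
    unfolding gain_def using weight_pos by (simp add: field_simps power2_eq_square)
  then show ?thesis
    unfolding sqrt_weights weighted_laplacian
    using W.sigma_max_transfer_le[OF smult_carrier_mat[OF input_mat_carrier] _ scaled_input_gram]
      W.sigma_max_transfer_zero[OF smult_carrier_mat[OF input_mat_carrier] _ scaled_input_gram] scaled
    by (intro hinf_norm_eqI) simp_all
qed

end

lemma extreme_gain_formulas:
  fixes a b r x :: real
  assumes "0 < r" "0 < x"
  shows "(a + b * x * sqrt r ^ 2) / (x * sqrt r ^ 4) = a / (r\<^sup>2 * x) + b / r"
    and "(a + b * x * sqrt r * sqrt r) / (x * sqrt r ^ 3 * sqrt r) = a / (r\<^sup>2 * x) + b / r"
proof -
  have "sqrt r ^ 4 = r\<^sup>2" "sqrt r ^ 3 * sqrt r = r\<^sup>2" "sqrt r * sqrt r = r" "sqrt r ^ 2 = r"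
    using assms(1) by (simp_all add: power_def numeral_eq_Suc power2_eq_square)
  then show "(a + b * x * sqrt r ^ 2) / (x * sqrt r ^ 4) = a / (r\<^sup>2 * x) + b / r"
    and "(a + b * x * sqrt r * sqrt r) / (x * sqrt r ^ 3 * sqrt r) = a / (r\<^sup>2 * x) + b / r"
    using assms by (simp_all add: field_simps power2_eq_square)
qed

theorem corollary3:
  fixes n :: nat and es :: "(nat \<times> nat) list" and \<rho> \<sigma>w \<sigma>v :: real
    and \<epsilon> :: "nat \<Rightarrow> real"
    and D E W Le :: "real mat" and Sig Pi :: "complex \<Rightarrow> complex mat"
    and L1 L2 U :: real
  assumes "n \<ge> 2" and "is_tree n es" and "length es = n - 1"
    and "\<rho> > 0" and "\<forall>i<n. \<epsilon> i > 0"
  defines "D \<equiv> incidence n es"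
    and "E \<equiv> diag_of n \<epsilon>"
    and "W \<equiv> \<rho> \<cdot>\<^sub>m 1\<^sub>m (n - 1)"
    and "Le \<equiv> transpose_mat D * minv E * D"
    and "Sig \<equiv> (\<lambda>s. minv (s \<cdot>\<^sub>m 1\<^sub>m (n - 1) + cmat (Le * W)) *
                 cmat (hcat (\<sigma>w \<cdot>\<^sub>m (transpose_mat D * diag_pow E (-1/2)))
                            ((- \<sigma>v) \<cdot>\<^sub>m (Le * diag_pow W (1/2)))))"
    and "Pi \<equiv> (\<lambda>s. cmat (diag_pow W (1/2)) * Sig s)"
    and "L1 \<equiv> (\<sigma>w\<^sup>2 + \<sigma>v\<^sup>2 * lam_min Le * lam_max (diag_pow W (1/2)) ^ 2)
              / (lam_min Le * lam_max (diag_pow W (1/2)) ^ 4)"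
    and "L2 \<equiv> (\<sigma>w\<^sup>2 + \<sigma>v\<^sup>2 * lam_max Le * lam_max (diag_pow W (1/2)) * lam_min (diag_pow W (1/2)))
              / (lam_max Le * lam_max (diag_pow W (1/2)) ^ 3 * lam_min (diag_pow W (1/2)))"
    and "U \<equiv> (\<sigma>w\<^sup>2 + \<sigma>v\<^sup>2 * lam_min Le * lam_min (diag_pow W (1/2)) ^ 2)
              / (lam_min Le * lam_min (diag_pow W (1/2)) ^ 4)"
  shows "(hinf_norm Sig)\<^sup>2 = (1 / \<rho>) * (hinf_norm Pi)\<^sup>2
       \<and> (1 / \<rho>) * (hinf_norm Pi)\<^sup>2
           = (1 / \<rho>\<^sup>2) * \<sigma>w\<^sup>2 * sigma_max (cmat (minv Le)) + (1 / \<rho>) * \<sigma>v\<^sup>2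
       \<and> (1 / \<rho>\<^sup>2) * \<sigma>w\<^sup>2 * sigma_max (cmat (minv Le)) + (1 / \<rho>) * \<sigma>v\<^sup>2 = max L1 L2
       \<and> max L1 L2 = U"
proof -
  obtain m where n: "n = Suc m" using assms(1) by (cases n) auto
  interpret tree_consensus m es \<epsilon> \<rho> \<sigma>w \<sigma>v
    using assms(1-5) unfolding n by unfold_locales auto
  have Le: "Le = laplacian" and W: "W = \<rho> \<cdot>\<^sub>m 1\<^sub>m m"
    unfolding Le_def D_def E_def laplacian_def W_def n by simp_all
  have Sig: "Sig = (\<lambda>s. minv (s \<cdot>\<^sub>m 1\<^sub>m m + cmat (laplacian * (\<rho> \<cdot>\<^sub>m 1\<^sub>m m))) * cmat input_mat)"
    unfolding Sig_def Le W input_mat_def D_def E_def n by simp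
  have "hinf_norm Sig = sqrt gain" "hinf_norm Pi = sqrt (\<rho> * gain)"
    unfolding Pi_def Sig W by (rule hinf_norm_transfer, rule hinf_norm_scaled_transfer)
  moreover have "L1 = gain" "U = gain"
    unfolding L1_def U_def Le W eigenvalues_sqrt_weights
      extreme_gain_formulas(1)[OF weight_pos sym_pos_def.pos[OF laplacian_sym_pos_def]] gain_def
    by simp_all
  moreover have "L2 \<le> gain"
    unfolding L2_def Le W eigenvalues_sqrt_weights extreme_gain_formulas(2)[OF weight_pos lam_max_pos]
    by (rule gain_at_lam_max_le)
  ultimately show ?thesis
    unfolding Le gain_eq_sigma_max_minv using weight_pos gain_nonneg by (simp add: max_def)
qed

end
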